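(* Let $k$ be a field and let $X$ be a locally weakly quasi-compact topological space which has a countable covering $\{U_n\}_{n\in\mathbb{N}}$ by open sets with $U_n\subset\subset X$ for every $n$. Then the family of c-soft sheaves in $\mathrm{Mod}(k_X)$ is injective with respect to the functor $\Gamma(X;\bullet)$; that is: every sheaf admits a monomorphism into a c-soft sheaf; if $0\to F'\to F\to F''\to0$ is exact in $\mathrm{Mod}(k_X)$ with $F',F$ c-soft then $F''$ is c-soft; and if $0\to F'\to F\to F''\to0$ is exact with $F'$ c-soft then $0\to\Gamma(X;F')\to\Gamma(X;F)\to\Gamma(X;F'')\to0$ is exact.
   Context: For open subsets $V\subseteq U$ of a topological space $X$, write $V\subset\subset U$ (equivalently $U\supset\supset V$) if for every covering $\{U_i\}_{i\in I}$ of $U$ by open sets there is a finite $J\subseteq I$ with $V\subseteq\bigcup_{i\in J}U_i$; $\mathrm{Op}^c(U)$ is the set of such $V$. $X$ is locally weakly quasi-compact if for all open $U,V$: (LWC1) every $x\in U$ has a fundamental system of neighborhoods in $\mathrm{Op}^c(U)$; (LWC2) for $U'\in\mathrm{Op}^c(U)$, $V'\in\mathrm{Op}^c(V)$ one has $U'\cap V'\in\mathrm{Op}^c(U\cap V)$; (LWC3) for every $U'\in\mathrm{Op}^c(U)$ there is $W\in\mathrm{Op}^c(U)$ with $U'\subset\subset W$. $\mathrm{Mod}(k_X)$ is the category of sheaves of $k$-vector spaces on $X$. A sheaf $F$ on $X$ is c-soft if for all $V,W\in\mathrm{Op}^c(X)$ with $V\subset\subset W$ the restriction morphism $\Gamma(W;F)\to\varinjlim_{U\supset\supset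 V}\Gamma(U;F)$ (limit over open $U$ with $V\subset\subset U$) is surjective. *)

theory Defs
  imports "HOL-Analysis.Analysis" "HOL-Library.Function_Algebras"
begin

definition compactly_in :: "'a topology \<Rightarrow> 'a set \<Rightarrow> 'a set \<Rightarrow> bool" where
  "compactly_in X V U \<longleftrightarrow> openin X V \<and> openin X U \<and> V \<subseteq> U \<and>
     (\<forall>\<U>. (\<forall>W\<in>\<U>. openin X W \<and> W \<subseteq> U) \<and> \<Union>\<U> = U \<longrightarrow>
        (\<exists>\<J>. finite \<J> \<and> \<J> \<subseteq> \<U> \<and> V \<subseteq> \<Union>\<J>))"

definition locally_weakly_quasi_compact :: "'a topology \<Rightarrow> bool" where
  "locally_weakly_quasi_compact X \<longleftrightarrow>
     (\<forall>U. openin X U \<longrightarrow> (\<forall>x\<in>U. \<forall>N. openin X N \<and> x \<in> N \<longrightarrow>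
          (\<exists>V. compactly_in X V U \<and> x \<in> V \<and> V \<subseteq> N))) \<and>
     (\<forall>U V U' V'. compactly_in X U' U \<and> compactly_in X V' V \<longrightarrow>
          compactly_in X (U' \<inter> V') (U \<inter> V)) \<and>
     (\<forall>U U'. compactly_in X U' U \<longrightarrow> (\<exists>W. compactly_in X W U \<and> compactly_in X U' W))"

text \<open>A sheaf of k-vector spaces on X is given by sections S U (for open U), which are
  linear subspaces of an ambient k-vector space (type 'v with scalar multiplication smul),
  and restriction maps res U V : S U \<rightarrow> S V for open V \<subseteq> U.\<close>
definition is_sheaf ::
  "'a topology \<Rightarrow> ('k::field \<Rightarrow> 'v::ab_group_add \<Rightarrow> 'v) \<Rightarrow>
   ('a set \<Rightarrow> 'v set) \<Rightarrow> ('a set \<Rightarrow> 'a set \<Rightarrow> 'v \<Rightarrow> 'v) \<Rightarrow> bool" where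
  "is_sheaf X smul S res \<longleftrightarrow>
     vector_space smul \<and>
     (\<forall>U. openin X U \<longrightarrow> module.subspace smul (S U)) \<and>
     (\<forall>U V. openin X U \<and> openin X V \<and> V \<subseteq> U \<longrightarrow>
        (\<forall>s\<in>S U. res U V s \<in> S V) \<and>
        (\<forall>s\<in>S U. \<forall>t\<in>S U. res U V (s + t) = res U V s + res U V t) \<and>
        (\<forall>c. \<forall>s\<in>S U. res U V (smul c s) = smul c (res U V s))) \<and>
     (\<forall>U. openin X U \<longrightarrow> (\<forall>s\<in>S U. res U U s = s)) \<and>
     (\<forall>U V W. openin X U \<and> openin X V \<and> openin X W \<and> W \<subseteq> V \<and> V \<subseteq> U \<longrightarrow>
        (\<forall>s\<in>S U. res V W (res U V s) = res U W s)) \<and>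
     (\<forall>U \<U>. openin X U \<and> (\<forall>W\<in>\<U>. openin X W \<and> W \<subseteq> U) \<and> \<Union>\<U> = U \<longrightarrow>
        (\<forall>s\<in>S U. \<forall>t\<in>S U. (\<forall>W\<in>\<U>. res U W s = res U W t) \<longrightarrow> s = t) \<and>
        (\<forall>f. (\<forall>W\<in>\<U>. f W \<in> S W) \<and>
             (\<forall>W1\<in>\<U>. \<forall>W2\<in>\<U>. res W1 (W1 \<inter> W2) (f W1) = res W2 (W1 \<inter> W2) (f W2)) \<longrightarrow>
             (\<exists>s\<in>S U. \<forall>W\<in>\<U>. res U W s = f W)))"

definition sheaf_hom ::
  "'a topology \<Rightarrow> ('k::field \<Rightarrow> 'v::ab_group_add \<Rightarrow> 'v) \<Rightarrow>
   ('a set \<Rightarrow> 'v set) \<Rightarrow> ('a set \<Rightarrow> 'a set \<Rightarrow> 'v \<Rightarrow> 'v) \<Rightarrow>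
   ('k \<Rightarrow> 'w::ab_group_add \<Rightarrow> 'w) \<Rightarrow>
   ('a set \<Rightarrow> 'w set) \<Rightarrow> ('a set \<Rightarrow> 'a set \<Rightarrow> 'w \<Rightarrow> 'w) \<Rightarrow>
   ('a set \<Rightarrow> 'v \<Rightarrow> 'w) \<Rightarrow> bool" where
  "sheaf_hom X smul1 S1 res1 smul2 S2 res2 \<phi> \<longleftrightarrow>
     is_sheaf X smul1 S1 res1 \<and> is_sheaf X smul2 S2 res2 \<and>
     (\<forall>U. openin X U \<longrightarrow>
        (\<forall>s\<in>S1 U. \<phi> U s \<in> S2 U) \<and>
        (\<forall>s\<in>S1 U. \<forall>t\<in>S1 U. \<phi> U (s + t) = \<phi> U s + \<phi> U t) \<and>
        (\<forall>c. \<forall>s\<in>S1 U. \<phi> U (smul1 c s) = smul2 c (\<phi> U s))) \<and>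
     (\<forall>U V. openin X U \<and> openin X V \<and> V \<subseteq> U \<longrightarrow>
        (\<forall>s\<in>S1 U. \<phi> V (res1 U V s) = res2 U V (\<phi> U s)))"

definition germ_eq ::
  "'a topology \<Rightarrow> ('a set \<Rightarrow> 'a set \<Rightarrow> 'v \<Rightarrow> 'v) \<Rightarrow> 'a \<Rightarrow> 'a set \<Rightarrow> 'v \<Rightarrow> 'a set \<Rightarrow> 'v \<Rightarrow> bool" where
  "germ_eq X res x U s V t \<longleftrightarrow>
     (\<exists>W. openin X W \<and> x \<in> W \<and> W \<subseteq> U \<inter> V \<and> res U W s = res V W t)"

definition germ_zero ::
  "'a topology \<Rightarrow> ('a set \<Rightarrow> 'a set \<Rightarrow> 'v::zero \<Rightarrow> 'v) \<Rightarrow> 'a \<Rightarrow> 'a set \<Rightarrow> 'v \<Rightarrow> bool" where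
  "germ_zero X res x U s \<longleftrightarrow> (\<exists>W. openin X W \<and> x \<in> W \<and> W \<subseteq> U \<and> res U W s = 0)"

text \<open>phi is a monomorphism: it is injective on all stalks.\<close>
definition stalk_injective ::
  "'a topology \<Rightarrow> ('a set \<Rightarrow> 'v set) \<Rightarrow> ('a set \<Rightarrow> 'a set \<Rightarrow> 'w::zero \<Rightarrow> 'w) \<Rightarrow>
   ('a set \<Rightarrow> 'a set \<Rightarrow> 'v::zero \<Rightarrow> 'v) \<Rightarrow> ('a set \<Rightarrow> 'v \<Rightarrow> 'w) \<Rightarrow> bool" where
  "stalk_injective X S1 res2 res1 \<phi> \<longleftrightarrow>
     (\<forall>x\<in>topspace X. \<forall>U. \<forall>s\<in>S1 U. openin X U \<and> x \<in> U \<and> germ_zero X res2 x U (\<phi> U s)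
        \<longrightarrow> germ_zero X res1 x U s)"

text \<open>0 \<rightarrow> F1 \<rightarrow> F2 \<rightarrow> F3 \<rightarrow> 0 is an exact sequence in Mod(k_X), i.e. exact on every stalk.\<close>
definition short_exact ::
  "'a topology \<Rightarrow>
   ('k::field \<Rightarrow> 'u::ab_group_add \<Rightarrow> 'u) \<Rightarrow> ('a set \<Rightarrow> 'u set) \<Rightarrow> ('a set \<Rightarrow> 'a set \<Rightarrow> 'u \<Rightarrow> 'u) \<Rightarrow>
   ('k \<Rightarrow> 'v::ab_group_add \<Rightarrow> 'v) \<Rightarrow> ('a set \<Rightarrow> 'v set) \<Rightarrow> ('a set \<Rightarrow> 'a set \<Rightarrow> 'v \<Rightarrow> 'v) \<Rightarrow>
   ('k \<Rightarrow> 'w::ab_group_add \<Rightarrow> 'w) \<Rightarrow> ('a set \<Rightarrow> 'w set) \<Rightarrow> ('a set \<Rightarrow> 'a set \<Rightarrow> 'w \<Rightarrow> 'w) \<Rightarrow>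
   ('a set \<Rightarrow> 'u \<Rightarrow> 'v) \<Rightarrow> ('a set \<Rightarrow> 'v \<Rightarrow> 'w) \<Rightarrow> bool" where
  "short_exact X sc1 S1 r1 sc2 S2 r2 sc3 S3 r3 \<phi> \<psi> \<longleftrightarrow>
     sheaf_hom X sc1 S1 r1 sc2 S2 r2 \<phi> \<and> sheaf_hom X sc2 S2 r2 sc3 S3 r3 \<psi> \<and>
     stalk_injective X S1 r2 r1 \<phi> \<and>
     (\<forall>x\<in>topspace X. \<forall>U. \<forall>s\<in>S1 U. openin X U \<and> x \<in> U \<longrightarrow>
        germ_zero X r3 x U (\<psi> U (\<phi> U s))) \<and>
     (\<forall>x\<in>topspace X. \<forall>U. \<forall>t\<in>S2 U. openin X U \<and> x \<in> U \<and> germ_zero X r3 x U (\<psi> U t) \<longrightarrow>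
        (\<exists>V. \<exists>s\<in>S1 V. openin X V \<and> x \<in> V \<and> germ_eq X r2 x V (\<phi> V s) U t)) \<and>
     (\<forall>x\<in>topspace X. \<forall>U. \<forall>u\<in>S3 U. openin X U \<and> x \<in> U \<longrightarrow>
        (\<exists>V. \<exists>t\<in>S2 V. openin X V \<and> x \<in> V \<and> germ_eq X r3 x V (\<psi> V t) U u))"

text \<open>Gamma(X;F) is S (topspace X); exactness of 0 \<rightarrow> Gamma(F1) \<rightarrow> Gamma(F2) \<rightarrow> Gamma(F3) \<rightarrow> 0.\<close>
definition global_sections_exact ::
  "'a topology \<Rightarrow> ('a set \<Rightarrow> 'u::zero set) \<Rightarrow> ('a set \<Rightarrow> 'v::zero set) \<Rightarrow> ('a set \<Rightarrow> 'w::zero set) \<Rightarrow>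
   ('a set \<Rightarrow> 'u \<Rightarrow> 'v) \<Rightarrow> ('a set \<Rightarrow> 'v \<Rightarrow> 'w) \<Rightarrow> bool" where
  "global_sections_exact X S1 S2 S3 \<phi> \<psi> \<longleftrightarrow>
     (let T = topspace X in
       inj_on (\<phi> T) (S1 T) \<and>
       \<phi> T ` S1 T = {t \<in> S2 T. \<psi> T t = 0} \<and>
       \<psi> T ` S2 T = S3 T)"

text \<open>c-soft: for V, W in Op^c(X) with V relatively compact in W, the map
  Gamma(W;F) \<rightarrow> colim_{U, V relatively compact in U} Gamma(U;F) is surjective.
  An element of the (directed) colimit is represented by a pair (U,s), and the image of
  t in Gamma(W;F) equals it iff s and t agree on some U'' with V relatively compact in U''
  and U'' contained in U \<inter> W.\<close>
definition c_soft ::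
  "'a topology \<Rightarrow> ('a set \<Rightarrow> 'v set) \<Rightarrow> ('a set \<Rightarrow> 'a set \<Rightarrow> 'v \<Rightarrow> 'v) \<Rightarrow> bool" where
  "c_soft X S res \<longleftrightarrow>
     (\<forall>V W. compactly_in X V (topspace X) \<and> compactly_in X W (topspace X) \<and>
            compactly_in X V W \<longrightarrow>
        (\<forall>U. \<forall>s\<in>S U. compactly_in X V U \<longrightarrow>
           (\<exists>t\<in>S W. \<exists>U''. compactly_in X V U'' \<and> U'' \<subseteq> U \<inter> W \<and>
                res U U'' s = res W U'' t)))"

end

theory Submission
  imports Defs
begin

text \<open>
  Every sheaf embeds into the sheaf of its discontinuous sections (families of germs), which is
  flabby and hence c-soft. For \<open>0 \<rightarrow> F' \<rightarrow> F \<rightarrow> F'' \<rightarrow> 0\<close> with \<open>F'\<close> c-soft the key point is that a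
  section \<open>u\<close> of \<open>F''\<close> over \<open>U\<close> lifts to \<open>F\<close> on a neighbourhood of every \<open>V \<subset>\<subset> U\<close>: lifts exist
  locally, finitely many of them cover \<open>V\<close>, and two lifts on \<open>A\<close> and \<open>B\<close> differ on \<open>A \<inter> B\<close> by a
  section of \<open>F'\<close>; extending this section by c-softness and correcting one lift with it makes the
  two lifts agree on a relatively compact part of \<open>A \<inter> B\<close>, where they can be glued. Lifting and
  then extending in \<open>F\<close> shows that \<open>F''\<close> is c-soft when \<open>F\<close> is. For global sections, exhaust \<open>X\<close> by
  \<open>W\<^sub>0 \<subset>\<subset> W\<^sub>1 \<subset>\<subset> \<dots>\<close> and choose lifts on \<open>W\<^sub>n\<^sub>+\<^sub>1\<close> which, by the same correction, agree on
  \<open>W\<^sub>n\<close> with the previous one; their restrictions glue to a global lift.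
\<close>

section \<open>Linear algebra\<close>

lemma vector_space_pointwise:
  assumes "vector_space (smul :: 'k::field \<Rightarrow> 'v::ab_group_add \<Rightarrow> 'v)"
  shows "vector_space (\<lambda>c (f :: 'b \<Rightarrow> 'v) x. smul c (f x))"
proof -
  interpret vector_space smul by fact
  show ?thesis
    by unfold_locales (auto simp: fun_eq_iff scale_right_distrib scale_left_distrib)
qed

lemma ex_linear_with_kernel:
  assumes "vector_space smul" and "module.subspace smul K"
  shows "\<exists>p. Vector_Spaces.linear smul smul p \<and> (\<forall>v. p v = 0 \<longleftrightarrow> v \<in> K)"
proof -
  interpret vector_space smul by fact
  interpret vp: vector_space_pair smul smul by unfold_locales
  obtain B where B: "B \<subseteq> K" "independent B" "K \<subseteq> span B"
    using maximal_independent_subset[of K] by blast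
  have span_B: "span B = K"
    using span_minimal[OF B(1) assms(2)] B(3) by auto
  define q where "q = vp.construct B id"
  have q_linear: "Vector_Spaces.linear smul smul q"
    unfolding q_def by (rule vp.linear_construct[OF B(2)])
  have q_in: "q v \<in> K" for v
    using vp.construct_in_span[OF B(2), of id v] span_B by (simp add: q_def)
  have q_id: "q k = k" if "k \<in> K" for k
    using vp.linear_eq_on[OF q_linear linear_id, of k B] that span_B vp.construct_basis[OF B(2)]
    by (auto simp: q_def)
  have "Vector_Spaces.linear smul smul (\<lambda>v. v - q v)"
    using vp.linear_compose_sub[OF linear_ident q_linear] by simp
  moreover have "v - q v = 0 \<longleftrightarrow> v \<in> K" for v
    using q_in q_id by (metis eq_iff_diff_eq_0)
  ultimately show ?thesis by blast
qed

section \<open>Relatively compact open sets\<close>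

lemma compactly_inD:
  assumes "compactly_in X V U"
  shows "openin X V" "openin X U" "V \<subseteq> U"
  using assms by (simp_all add: compactly_in_def)

lemma compactly_in_finite_subcover:
  assumes "compactly_in X V U" "\<And>W. W \<in> \<U> \<Longrightarrow> openin X W \<and> W \<subseteq> U" "\<Union>\<U> = U"
  obtains \<J> where "finite \<J>" "\<J> \<subseteq> \<U>" "V \<subseteq> \<Union>\<J>"
proof -
  have cover: "(\<forall>W\<in>\<U>. openin X W \<and> W \<subseteq> U) \<and> \<Union>\<U> = U"
    using assms(2,3) by blast
  have "\<forall>\<U>. (\<forall>W\<in>\<U>. openin X W \<and> W \<subseteq> U) \<and> \<Union>\<U> = U \<longrightarrow>
      (\<exists>\<J>. finite \<J> \<and> \<J> \<subseteq> \<U> \<and> V \<subseteq> \<Union>\<J>)"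
    using assms(1) by (simp add: compactly_in_def)
  from this[rule_format, OF cover] show thesis
    using that by blast
qed

lemma compactly_in_mono:
  assumes "compactly_in X V U" "V' \<subseteq> V" "openin X V'" "U \<subseteq> U'" "openin X U'"
  shows "compactly_in X V' U'"
  unfolding compactly_in_def
proof (intro conjI allI impI)
  show "openin X V'" "openin X U'" "V' \<subseteq> U'"
    using assms compactly_inD[OF assms(1)] by auto
  fix \<U> assume \<U>: "(\<forall>W\<in>\<U>. openin X W \<and> W \<subseteq> U') \<and> \<Union>\<U> = U'"
  have "openin X U" using compactly_inD[OF assms(1)] by blast
  then have "openin X W \<and> W \<subseteq> U" if "W \<in> (\<lambda>W. W \<inter> U) ` \<U>" for W
    using that \<U> by (auto intro: openin_Int)
  moreover have "\<Union>((\<lambda>W. W \<inter> U) ` \<U>) = U"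
    using \<U> assms(4) by auto
  ultimately obtain \<J>' where \<J>': "finite \<J>'" "\<J>' \<subseteq> (\<lambda>W. W \<inter> U) ` \<U>" "V \<subseteq> \<Union>\<J>'"
    by (rule compactly_in_finite_subcover[OF assms(1)])
  obtain \<J> where \<J>: "\<J> \<subseteq> \<U>" "finite \<J>" "\<J>' = (\<lambda>W. W \<inter> U) ` \<J>"
    using finite_subset_image[OF \<J>'(1,2)] by blast
  have "V' \<subseteq> \<Union>\<J>"
    using \<J>'(3) assms(2) unfolding \<J>(3) by auto
  with \<J>(1,2) show "\<exists>\<J>. finite \<J> \<and> \<J> \<subseteq> \<U> \<and> V' \<subseteq> \<Union>\<J>"
    by blast
qed

lemma compactly_in_subset:
  "compactly_in X V U \<Longrightarrow> V' \<subseteq> V \<Longrightarrow> openin X V' \<Longrightarrow> compactly_in X V' U"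
  using compactly_in_mono[of X V U V' U] compactly_inD(2) by blast

lemma compactly_in_superset:
  "compactly_in X V U \<Longrightarrow> U \<subseteq> U' \<Longrightarrow> openin X U' \<Longrightarrow> compactly_in X V U'"
  using compactly_in_mono[of X V U V U'] compactly_inD(1) by blast

lemma compactly_in_topspace: "compactly_in X V U \<Longrightarrow> compactly_in X V (topspace X)"
  by (meson compactly_in_superset compactly_inD(2) openin_subset openin_topspace)

lemma compactly_in_empty: "openin X U \<Longrightarrow> compactly_in X {} U"
  unfolding compactly_in_def by (auto intro!: exI[of _ "{}"])

lemma compactly_in_Un:
  assumes "compactly_in X A U" "compactly_in X B U"
  shows "compactly_in X (A \<union> B) U"
  unfolding compactly_in_def
proof (intro conjI allI impI)
  show "openin X (A \<union> B)" "openin X U" "A \<union> B \<subseteq> U"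
    using compactly_inD[OF assms(1)] compactly_inD[OF assms(2)] by auto
  fix \<U> assume "(\<forall>W\<in>\<U>. openin X W \<and> W \<subseteq> U) \<and> \<Union>\<U> = U"
  then have "\<And>W. W \<in> \<U> \<Longrightarrow> openin X W \<and> W \<subseteq> U" "\<Union>\<U> = U" by blast+
  moreover obtain \<J>\<^sub>A where "finite \<J>\<^sub>A" "\<J>\<^sub>A \<subseteq> \<U>" "A \<subseteq> \<Union>\<J>\<^sub>A"
    using compactly_in_finite_subcover[OF assms(1) calculation] .
  moreover obtain \<J>\<^sub>B where "finite \<J>\<^sub>B" "\<J>\<^sub>B \<subseteq> \<U>" "B \<subseteq> \<Union>\<J>\<^sub>B"
    using compactly_in_finite_subcover[OF assms(2) calculation(1,2)] .
  ultimately show "\<exists>\<J>. finite \<J> \<and> \<J> \<subseteq> \<U> \<and> A \<union> B \<subseteq> \<Union>\<J>"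
    by (intro exI[of _ "\<J>\<^sub>A \<union> \<J>\<^sub>B"]) auto
qed

lemma compactly_in_Union:
  "finite \<A> \<Longrightarrow> openin X U \<Longrightarrow> (\<And>A. A \<in> \<A> \<Longrightarrow> compactly_in X A U) \<Longrightarrow> compactly_in X (\<Union>\<A>) U"
  by (induction \<A> rule: finite_induct) (auto intro: compactly_in_empty compactly_in_Un)

locale lwqc_space =
  fixes X :: "'a topology"
  assumes lwqc: "locally_weakly_quasi_compact X"
begin

lemmas lwqc_unfolded = lwqc[unfolded locally_weakly_quasi_compact_def]

lemma compactly_in_nhd:
  assumes "openin X U" "x \<in> U"
  obtains V where "compactly_in X V U" "x \<in> V"
proof -
  have "openin X U \<and> x \<in> U" using assms by blast
  from lwqc_unfolded[THEN conjunct1, rule_format, OF assms this] show thesis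
    using that by blast
qed

lemma compactly_in_Int:
  "compactly_in X U' U \<Longrightarrow> compactly_in X V' V \<Longrightarrow> compactly_in X (U' \<inter> V') (U \<inter> V)"
  using lwqc_unfolded[THEN conjunct2, THEN conjunct1, rule_format, of U' U V' V] by blast

lemma compactly_in_interpolate:
  assumes "compactly_in X U' U"
  obtains W where "compactly_in X W U" "compactly_in X U' W"
  using lwqc_unfolded[THEN conjunct2, THEN conjunct2, rule_format, OF assms] that by blast

lemma compactly_in_Int_right:
  "compactly_in X V U \<Longrightarrow> compactly_in X V W \<Longrightarrow> compactly_in X V (U \<inter> W)"
  using compactly_in_Int[of V U V W] by simp

lemma compactly_in_Un_split:
  assumes K: "compactly_in X K (A \<union> B)" and "openin X A" "openin X B"
  obtains K\<^sub>A K\<^sub>B where "compactly_in X K\<^sub>A A" "compactly_in X K\<^sub>B B" "K \<subseteq> K\<^sub>A \<union> K\<^sub>B"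
proof -
  define \<C> where "\<C> = {N. compactly_in X N A} \<union> {N. compactly_in X N B}"
  have "openin X W \<and> W \<subseteq> A \<union> B" if "W \<in> \<C>" for W
    using that compactly_inD[of X W A] compactly_inD[of X W B] unfolding \<C>_def by blast
  moreover have "\<Union>\<C> = A \<union> B"
  proof
    show "\<Union>\<C> \<subseteq> A \<union> B"
      using calculation by blast
    show "A \<union> B \<subseteq> \<Union>\<C>"
    proof
      fix x assume "x \<in> A \<union> B"
      then obtain V where "compactly_in X V A \<or> compactly_in X V B" "x \<in> V"
        by (metis Un_iff compactly_in_nhd \<open>openin X A\<close> \<open>openin X B\<close>)
      then show "x \<in> \<Union>\<C>" by (auto simp: \<C>_def)
    qed
  qed
  ultimately obtain \<J> where \<J>: "finite \<J>" "\<J> \<subseteq> \<C>" "K \<subseteq> \<Union>\<J>"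
    by (rule compactly_in_finite_subcover[OF K])
  have "compactly_in X (\<Union>{N\<in>\<J>. compactly_in X N A}) A"
    using \<J>(1) \<open>openin X A\<close> by (intro compactly_in_Union) auto
  moreover have "compactly_in X (\<Union>{N\<in>\<J>. compactly_in X N B}) B"
    using \<J>(1) \<open>openin X B\<close> by (intro compactly_in_Union) auto
  moreover have "K \<subseteq> \<Union>{N\<in>\<J>. compactly_in X N A} \<union> \<Union>{N\<in>\<J>. compactly_in X N B}"
    using \<J> unfolding \<C>_def by blast
  ultimately show thesis using that by blast
qed

lemma exhausting_sequence:
  assumes "\<exists>C :: nat \<Rightarrow> 'a set. (\<forall>n. compactly_in X (C n) (topspace X)) \<and> (\<Union>n. C n) = topspace X"
  obtains W :: "nat \<Rightarrow> 'a set" where "\<And>n. compactly_in X (W n) (topspace X)"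
    "\<And>n. compactly_in X (W n) (W (Suc n))" "(\<Union>n. W n) = topspace X"
proof -
  obtain C :: "nat \<Rightarrow> 'a set" where C: "\<And>n. compactly_in X (C n) (topspace X)" "(\<Union>n. C n) = topspace X"
    using assms by blast
  have "\<exists>W. \<forall>n. compactly_in X (W n) (topspace X) \<and> compactly_in X (W n \<union> C n) (W (Suc n))"
  proof (rule dependent_nat_choice)
    show "\<exists>W. compactly_in X W (topspace X)"
      by (blast intro: compactly_in_empty)
    fix W n assume "compactly_in X W (topspace X)"
    then have "compactly_in X (W \<union> C n) (topspace X)"
      using C(1) by (rule compactly_in_Un)
    then show "\<exists>W'. compactly_in X W' (topspace X) \<and> compactly_in X (W \<union> C n) W'"
      by (meson compactly_in_interpolate)
  qed
  then obtain W where W: "\<And>n. compactly_in X (W n) (topspace X)"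
    "\<And>n. compactly_in X (W n \<union> C n) (W (Suc n))"
    by blast
  have "compactly_in X (W n) (W (Suc n))" for n
    using compactly_in_subset[OF W(2)] compactly_inD(1)[OF W(1)] by blast
  moreover have "(\<Union>n. W n) = topspace X"
  proof
    show "(\<Union>n. W n) \<subseteq> topspace X"
      using compactly_inD(3)[OF W(1)] by (rule UN_least)
    have "C n \<subseteq> W (Suc n)" for n
      using compactly_inD(3)[OF W(2)] by blast
    then show "topspace X \<subseteq> (\<Union>n. W n)"
      unfolding C(2)[symmetric] by blast
  qed
  ultimately show thesis
    by (rule that[OF W(1)])
qed

end

section \<open>Sheaves\<close>

locale sheaf =
  fixes X :: "'a topology" and smul :: "'k::field \<Rightarrow> 'v::ab_group_add \<Rightarrow> 'v"
    and S :: "'a set \<Rightarrow> 'v set" and res :: "'a set \<Rightarrow> 'a set \<Rightarrow> 'v \<Rightarrow> 'v"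
  assumes sheaf: "is_sheaf X smul S res"
begin

lemma vector_space: "vector_space smul"
  using sheaf by (simp add: is_sheaf_def)

lemma subspace: "openin X U \<Longrightarrow> module.subspace smul (S U)"
  using sheaf by (simp add: is_sheaf_def)

lemma res_in: "openin X U \<Longrightarrow> openin X V \<Longrightarrow> V \<subseteq> U \<Longrightarrow> s \<in> S U \<Longrightarrow> res U V s \<in> S V"
  using sheaf by (simp add: is_sheaf_def)

lemma res_add:
  "openin X U \<Longrightarrow> openin X V \<Longrightarrow> V \<subseteq> U \<Longrightarrow> s \<in> S U \<Longrightarrow> t \<in> S U \<Longrightarrow>
    res U V (s + t) = res U V s + res U V t"
  using sheaf by (simp add: is_sheaf_def)

lemma res_scale:
  "openin X U \<Longrightarrow> openin X V \<Longrightarrow> V \<subseteq> U \<Longrightarrow> s \<in> S U \<Longrightarrow> res U V (smul c s) = smul c (res U V s)"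
  using sheaf by (simp add: is_sheaf_def)

lemma res_id: "openin X U \<Longrightarrow> s \<in> S U \<Longrightarrow> res U U s = s"
  using sheaf by (simp add: is_sheaf_def)

lemma res_trans:
  "openin X U \<Longrightarrow> openin X V \<Longrightarrow> openin X W \<Longrightarrow> W \<subseteq> V \<Longrightarrow> V \<subseteq> U \<Longrightarrow> s \<in> S U \<Longrightarrow>
    res V W (res U V s) = res U W s"
  using sheaf by (simp add: is_sheaf_def)

lemma eq_if_res_eq:
  assumes "openin X U" "\<And>W. W \<in> \<U> \<Longrightarrow> openin X W \<and> W \<subseteq> U" "\<Union>\<U> = U"
    and "s \<in> S U" "t \<in> S U" "\<And>W. W \<in> \<U> \<Longrightarrow> res U W s = res U W t"
  shows "s = t"
proof -
  have "openin X U \<and> (\<forall>W\<in>\<U>. openin X W \<and> W \<subseteq> U) \<and> \<Union>\<U> = U"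
    using assms(1-3) by blast
  from sheaf[unfolded is_sheaf_def, THEN conjunct2, THEN conjunct2, THEN conjunct2, THEN conjunct2,
      THEN conjunct2, rule_format, OF this, THEN conjunct1, rule_format, OF assms(4,5)]
  show ?thesis
    using assms(6) by blast
qed

lemma ex_glued:
  assumes "openin X U" "\<And>W. W \<in> \<U> \<Longrightarrow> openin X W \<and> W \<subseteq> U" "\<Union>\<U> = U"
    and "\<And>W. W \<in> \<U> \<Longrightarrow> f W \<in> S W"
    and "\<And>W W'. W \<in> \<U> \<Longrightarrow> W' \<in> \<U> \<Longrightarrow> res W (W \<inter> W') (f W) = res W' (W \<inter> W') (f W')"
  obtains s where "s \<in> S U" "\<And>W. W \<in> \<U> \<Longrightarrow> res U W s = f W"
proof -
  have "openin X U \<and> (\<forall>W\<in>\<U>. openin X W \<and> W \<subseteq> U) \<and> \<Union>\<U> = U"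
    using assms(1-3) by blast
  note glue = sheaf[unfolded is_sheaf_def, THEN conjunct2, THEN conjunct2, THEN conjunct2, THEN conjunct2,
      THEN conjunct2, rule_format, OF this, THEN conjunct2, rule_format]
  have "(\<forall>W\<in>\<U>. f W \<in> S W) \<and>
      (\<forall>W\<in>\<U>. \<forall>W'\<in>\<U>. res W (W \<inter> W') (f W) = res W' (W \<inter> W') (f W'))"
    using assms(4,5) by blast
  from glue[OF this] show thesis
    using that by blast
qed

lemma zero_in: "openin X U \<Longrightarrow> 0 \<in> S U"
  using module.subspace_0[OF vector_space[folded module_iff_vector_space] subspace] .

lemma add_in: "openin X U \<Longrightarrow> s \<in> S U \<Longrightarrow> t \<in> S U \<Longrightarrow> s + t \<in> S U"
  using module.subspace_add[OF vector_space[folded module_iff_vector_space] subspace] .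

lemma diff_in: "openin X U \<Longrightarrow> s \<in> S U \<Longrightarrow> t \<in> S U \<Longrightarrow> s - t \<in> S U"
  using module.subspace_diff[OF vector_space[folded module_iff_vector_space] subspace] .

lemma res_zero: "openin X U \<Longrightarrow> openin X V \<Longrightarrow> V \<subseteq> U \<Longrightarrow> res U V 0 = 0"
  using res_add[of U V 0 0] zero_in[of U] by simp

lemma res_diff:
  "openin X U \<Longrightarrow> openin X V \<Longrightarrow> V \<subseteq> U \<Longrightarrow> s \<in> S U \<Longrightarrow> t \<in> S U \<Longrightarrow>
    res U V (s - t) = res U V s - res U V t"
  using res_add[of U V "s - t" t] diff_in[of U s t] by (simp add: algebra_simps)

lemma res_empty: "openin X U \<Longrightarrow> s \<in> S U \<Longrightarrow> res U {} s = 0"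
  by (rule eq_if_res_eq[of "{}" "{}"]) (auto intro: res_in zero_in)

lemma eq_zero_if_germs_zero:
  assumes U: "openin X U" and s: "s \<in> S U" and germs: "\<And>x. x \<in> U \<Longrightarrow> germ_zero X res x U s"
  shows "s = 0"
proof (rule eq_if_res_eq[OF U _ _ s zero_in[OF U]])
  let ?\<U> = "{W. openin X W \<and> W \<subseteq> U \<and> res U W s = 0}"
  show "openin X W \<and> W \<subseteq> U" if "W \<in> ?\<U>" for W
    using that by blast
  show "\<Union>?\<U> = U"
    using germs unfolding germ_zero_def by blast
  show "res U W s = res U W 0" if "W \<in> ?\<U>" for W
    using that res_zero[OF U] by auto
qed

lemma ex_glued_Un:
  assumes A: "openin X A" "a \<in> S A" and B: "openin X B" "b \<in> S B"
    and compatible: "res A (A \<inter> B) a = res B (A \<inter> B) b"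
  obtains s where "s \<in> S (A \<union> B)" "res (A \<union> B) A s = a" "res (A \<union> B) B s = b"
proof -
  define f where "f W = (if W = A then a else b)" for W
  have f_B: "f B = b"
  proof (cases "B = A")
    case True
    then have "res A A a = res A A b"
      using compatible by simp
    with True show ?thesis
      using res_id[OF A] res_id[OF B] by (simp add: f_def)
  qed (simp add: f_def)
  have f_A: "f A = a"
    by (simp add: f_def)
  have f_compatible: "res W (W \<inter> W') (f W) = res W' (W \<inter> W') (f W')"
    if "W \<in> {A, B}" "W' \<in> {A, B}" for W W'
  proof (cases "W = W'")
    case False
    with that have "W = A \<and> W' = B \<or> W = B \<and> W' = A"
      by blast
    then show ?thesis
      using compatible f_A f_B by (auto simp: Int_commute)
  qed simp
  have cover: "openin X W \<and> W \<subseteq> A \<union> B" if "W \<in> {A, B}" for W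
    using that A B by auto
  have f_in: "f W \<in> S W" if "W \<in> {A, B}" for W
    using that A B f_A f_B by auto
  obtain s where "s \<in> S (A \<union> B)" "\<And>W. W \<in> {A, B} \<Longrightarrow> res (A \<union> B) W s = f W"
    by (rule ex_glued[of "A \<union> B" "{A, B}" f, OF openin_Un[OF A(1) B(1)] cover _ f_in f_compatible]) simp_all
  then show thesis
    using that f_A f_B by simp
qed

lemma res_chain:
  assumes W: "\<And>n. openin X (W n)" "\<And>n. W n \<subseteq> W (Suc n)"
    and g: "\<And>n. g n \<in> S (W n)" "\<And>n. res (W (Suc n)) (W n) (g (Suc n)) = g n"
    and "m \<le> n"
  shows "res (W n) (W m) (g n) = g m"
  using \<open>m \<le> n\<close>
proof (induction n rule: dec_induct)
  case base
  then show ?case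
    using res_id[OF W(1) g(1)] .
next
  case (step n)
  have "res (W (Suc n)) (W m) (g (Suc n)) = res (W n) (W m) (res (W (Suc n)) (W n) (g (Suc n)))"
    using res_trans[OF W(1) W(1) W(1) lift_Suc_mono_le[of W, OF W(2) step(1)] W(2) g(1)] by simp
  also have "\<dots> = g m"
    using g(2) step(3) by simp
  finally show ?case .
qed

lemma ex_glued_increasing:
  assumes W: "\<And>n. openin X (W n)" "\<And>n. W n \<subseteq> W (Suc n)"
    and g: "\<And>n. g n \<in> S (W n)" "\<And>n. res (W (Suc n)) (W n) (g (Suc n)) = g n"
  obtains s where "s \<in> S (\<Union>n. W n)" "\<And>n. res (\<Union>n. W n) (W n) s = g n"
proof -
  have mono: "W m \<subseteq> W n" if "m \<le> n" for m n
    using lift_Suc_mono_le[of W, OF W(2) that] .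
  note g_res = res_chain[of W g, OF W g]
  \<comment> \<open>the sequence need not be injective, so sections are indexed by the first occurrence of a set\<close>
  define f where "f A = g (LEAST n. W n = A)" for A
  have f_W: "f (W n) = g n" for n
  proof -
    define k where "k = (LEAST k. W k = W n)"
    have "W k = W n" "k \<le> n"
      unfolding k_def by (rule LeastI[of _ n], rule refl) (rule Least_le, rule refl)
    then have "g k = g n"
      using g_res[of k n] res_id[OF W(1) g(1)] by simp
    then show ?thesis
      by (simp add: f_def k_def)
  qed
  have cover: "openin X A \<and> A \<subseteq> (\<Union>n. W n)" if "A \<in> range W" for A
    using that W(1) by blast
  obtain s where "s \<in> S (\<Union>n. W n)" "\<And>A. A \<in> range W \<Longrightarrow> res (\<Union>n. W n) A s = f A"
  proof (rule ex_glued[of "\<Union>n. W n" "range W" f])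
    show "res A (A \<inter> B) (f A) = res B (A \<inter> B) (f B)"
      if AB: "A \<in> range W" "B \<in> range W" for A B
    proof -
      obtain m n where "A = W m" "B = W n"
        using AB by blast
      moreover have "res (W m) (W m \<inter> W n) (g m) = res (W n) (W m \<inter> W n) (g n)" for m n
        using mono[of m n] mono[of n m] g_res[of m n] g_res[of n m] res_id[OF W(1) g(1)]
        by (cases "m \<le> n") (simp_all add: Int_absorb1 Int_absorb2)
      ultimately show ?thesis
        by (simp add: f_W)
    qed
  qed (use cover W(1) g(1) f_W in \<open>auto intro: openin_Union\<close>)
  then show thesis
    using that f_W by simp
qed

lemma c_soft_extend:
  assumes "c_soft X S res" "compactly_in X V (topspace X)" "compactly_in X W (topspace X)"
    "compactly_in X V W" "compactly_in X V U" "s \<in> S U"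
  obtains t where "t \<in> S W" "res W V t = res U V s"
proof -
  have "compactly_in X V (topspace X) \<and> compactly_in X W (topspace X) \<and> compactly_in X V W"
    using assms(2-4) by blast
  from assms(1)[unfolded c_soft_def, rule_format, OF this assms(6) assms(5)]
  obtain t U'' where t: "t \<in> S W" "compactly_in X V U''" "U'' \<subseteq> U \<inter> W" "res U U'' s = res W U'' t"
    by blast
  have opens: "openin X U" "openin X W" "openin X U''" "openin X V" "V \<subseteq> U''"
    using compactly_inD assms(4,5) t(2) by blast+
  have "res W V t = res U'' V (res W U'' t)"
    using res_trans[OF opens(2,3,4,5) _ t(1)] t(3) by simp
  also have "\<dots> = res U'' V (res U U'' s)"
    using t(4) by simp
  also have "\<dots> = res U V s"
    using res_trans[OF opens(1,3,4,5) _ assms(6)] t(3) by simp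
  finally show thesis
    using that t(1) by blast
qed

end

section \<open>Embedding into the sheaf of discontinuous sections\<close>

text \<open>\<open>point_sections\<close> is the product over all points of the skyscraper sheaves with stalk \<open>'b\<close>: its
  sections over \<open>U\<close> are arbitrary functions on \<open>U\<close>. It is flabby.\<close>
definition point_sections :: "'a set \<Rightarrow> ('a \<Rightarrow> 'b::zero) set" where
  "point_sections U = {f. \<forall>x. x \<notin> U \<longrightarrow> f x = 0}"

definition point_restrict :: "'a set \<Rightarrow> 'a set \<Rightarrow> ('a \<Rightarrow> 'b::zero) \<Rightarrow> 'a \<Rightarrow> 'b" where
  "point_restrict U V f = (\<lambda>x. if x \<in> V then f x else 0)"

lemma ex_point_sections_glued:
  assumes f: "\<And>W. W \<in> \<U> \<Longrightarrow> f W \<in> point_sections W"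
    and compatible: "\<And>W W'. W \<in> \<U> \<Longrightarrow> W' \<in> \<U> \<Longrightarrow>
      point_restrict W (W \<inter> W') (f W) = point_restrict W' (W \<inter> W') (f W')"
  shows "\<exists>g\<in>point_sections (\<Union>\<U>). \<forall>W\<in>\<U>. point_restrict (\<Union>\<U>) W g = f W"
proof -
  define g where "g x = (if \<exists>W\<in>\<U>. x \<in> W then f (SOME W. W \<in> \<U> \<and> x \<in> W) x else 0)" for x
  have g_eq: "g x = f W x" if "W \<in> \<U>" "x \<in> W" for W x
  proof -
    define W' where "W' = (SOME W. W \<in> \<U> \<and> x \<in> W)"
    have "W' \<in> \<U>" "x \<in> W'"
      using someI_ex[of "\<lambda>W. W \<in> \<U> \<and> x \<in> W"] that unfolding W'_def by blast+
    then have "point_restrict W' (W' \<inter> W) (f W') x = point_restrict W (W' \<inter> W) (f W) x"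
      using compatible that by metis
    then show ?thesis
      using \<open>x \<in> W'\<close> that unfolding g_def W'_def[symmetric] point_restrict_def by auto
  qed
  have "g \<in> point_sections (\<Union>\<U>)"
    unfolding point_sections_def g_def by auto
  moreover have "point_restrict (\<Union>\<U>) W g = f W" if "W \<in> \<U>" for W
    using that f g_eq unfolding point_restrict_def point_sections_def by auto
  ultimately show ?thesis
    by blast
qed

lemma is_sheaf_point_sections:
  assumes "vector_space smul"
  shows "is_sheaf X (\<lambda>c f x. smul c (f x)) point_sections point_restrict"
  unfolding is_sheaf_def
proof (intro conjI allI impI ballI)
  let ?smul = "\<lambda>c f x. smul c (f x)"
  interpret vector_space ?smul
    by (rule vector_space_pointwise[OF assms])
  show "vector_space ?smul"
    by unfold_locales
  show "subspace (point_sections U)" for U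
    unfolding subspace_def point_sections_def
    by (auto simp: module.scale_zero_right[OF assms[folded module_iff_vector_space]])
  fix U \<U> assume cover: "openin X U \<and> (\<forall>W\<in>\<U>. openin X W \<and> W \<subseteq> U) \<and> \<Union>\<U> = U"
  show "s = t" if "s \<in> point_sections U" "t \<in> point_sections U"
    "\<forall>W\<in>\<U>. point_restrict U W s = point_restrict U W t" for s t
  proof
    fix x
    show "s x = t x"
    proof (cases "x \<in> U")
      case True
      then obtain W where "W \<in> \<U>" "x \<in> W"
        using cover by blast
      then show ?thesis
        using that(3) unfolding point_restrict_def by (metis (mono_tags))
    qed (use that in \<open>simp add: point_sections_def\<close>)
  qed
  show "\<exists>s\<in>point_sections U. \<forall>W\<in>\<U>. point_restrict U W s = f W"
    if "(\<forall>W\<in>\<U>. f W \<in> point_sections W) \<and>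
      (\<forall>W\<in>\<U>. \<forall>W'\<in>\<U>. point_restrict W (W \<inter> W') (f W) = point_restrict W' (W \<inter> W') (f W'))" for f
    using ex_point_sections_glued[of \<U> f] that cover by auto
qed (auto simp: point_sections_def point_restrict_def fun_eq_iff
    module.scale_zero_right[OF assms[folded module_iff_vector_space]])

context lwqc_space
begin

lemma c_soft_point_sections: "c_soft X point_sections point_restrict"
  unfolding c_soft_def
proof (intro allI impI ballI)
  fix V W U and f :: "'a \<Rightarrow> 'b::zero"
  assume "compactly_in X V (topspace X) \<and> compactly_in X W (topspace X) \<and> compactly_in X V W"
    and "compactly_in X V U"
  then have "compactly_in X V (U \<inter> W)"
    using compactly_in_Int_right by blast
  moreover have "point_restrict U (U \<inter> W) f \<in> point_sections W"
    and "point_restrict U (U \<inter> W) f = point_restrict W (U \<inter> W) (point_restrict U (U \<inter> W) f)"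
    by (auto simp: point_sections_def point_restrict_def)
  ultimately show "\<exists>t\<in>point_sections W. \<exists>U''. compactly_in X V U'' \<and> U'' \<subseteq> U \<inter> W \<and>
      point_restrict U U'' f = point_restrict W U'' t"
    by blast
qed

end

definition germ_kernel :: "'a topology \<Rightarrow> 'a \<Rightarrow> ('a set \<Rightarrow> 'v::zero) set" where
  "germ_kernel X x =
    {g. \<exists>W. openin X W \<and> x \<in> W \<and> (\<forall>V. openin X V \<and> x \<in> V \<and> V \<subseteq> W \<longrightarrow> g V = 0)}"

lemma subspace_germ_kernel:
  fixes smul :: "'k::field \<Rightarrow> 'v::ab_group_add \<Rightarrow> 'v" and X :: "'a topology"
  assumes "vector_space smul" "x \<in> topspace X"
  shows "module.subspace (\<lambda>c g V. smul c (g V)) (germ_kernel X x)"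
proof -
  interpret vector_space "\<lambda>c g V. smul c (g V)"
    by (rule vector_space_pointwise[OF assms(1)])
  show ?thesis
    unfolding subspace_def
  proof (intro conjI ballI allI)
    show "0 \<in> germ_kernel X x"
      using assms(2) unfolding germ_kernel_def by auto
    fix g h :: "'a set \<Rightarrow> 'v" assume "g \<in> germ_kernel X x" "h \<in> germ_kernel X x"
    then obtain W\<^sub>g W\<^sub>h where "openin X W\<^sub>g" "x \<in> W\<^sub>g" "\<forall>V. openin X V \<and> x \<in> V \<and> V \<subseteq> W\<^sub>g \<longrightarrow> g V = 0"
      "openin X W\<^sub>h" "x \<in> W\<^sub>h" "\<forall>V. openin X V \<and> x \<in> V \<and> V \<subseteq> W\<^sub>h \<longrightarrow> h V = 0"
      unfolding germ_kernel_def by blast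
    then show "g + h \<in> germ_kernel X x"
      unfolding germ_kernel_def by (intro CollectI exI[of _ "W\<^sub>g \<inter> W\<^sub>h"]) auto
  next
    fix c and g :: "'a set \<Rightarrow> 'v" assume "g \<in> germ_kernel X x"
    then show "(\<lambda>V. smul c (g V)) \<in> germ_kernel X x"
      unfolding germ_kernel_def
      by (auto simp: module.scale_zero_right[OF assms(1)[folded module_iff_vector_space]])
  qed
qed

context sheaf
begin

text \<open>The class of \<open>restrictions U s\<close> modulo \<open>germ_kernel X x\<close> is the germ of \<open>s\<close> at \<open>x\<close>. A linear map
  \<open>P x\<close> with kernel \<open>germ_kernel X x\<close> therefore maps germs at \<open>x\<close> injectively into \<open>'a set \<Rightarrow> 'v\<close>, and
  \<open>germ_embedding P\<close> turns a section into the family of its germs.\<close>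
definition restrictions :: "'a set \<Rightarrow> 'v \<Rightarrow> 'a set \<Rightarrow> 'v" where
  "restrictions U s = (\<lambda>V. if openin X V \<and> V \<subseteq> U then res U V s else 0)"

lemma restrictions_add:
  "openin X U \<Longrightarrow> s \<in> S U \<Longrightarrow> t \<in> S U \<Longrightarrow> restrictions U (s + t) = restrictions U s + restrictions U t"
  unfolding restrictions_def by (auto simp: fun_eq_iff res_add)

lemma restrictions_scale:
  "openin X U \<Longrightarrow> s \<in> S U \<Longrightarrow> restrictions U (smul c s) = (\<lambda>V. smul c (restrictions U s V))"
  unfolding restrictions_def
  by (auto simp: fun_eq_iff res_scale module.scale_zero_right[OF vector_space[folded module_iff_vector_space]])

lemma restrictions_res_diff_in_germ_kernel:
  assumes "openin X U" "openin X V" "V \<subseteq> U" "s \<in> S U" "x \<in> V"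
  shows "restrictions V (res U V s) - restrictions U s \<in> germ_kernel X x"
  unfolding germ_kernel_def
proof (intro CollectI exI[of _ V] conjI allI impI)
  fix V' assume "openin X V' \<and> x \<in> V' \<and> V' \<subseteq> V"
  then show "(restrictions V (res U V s) - restrictions U s) V' = 0"
    using assms res_trans[of U V V' s] unfolding restrictions_def by auto
qed (use assms in auto)

lemma germ_zero_if_restrictions_in_germ_kernel:
  assumes "openin X U" "x \<in> U" "restrictions U s \<in> germ_kernel X x"
  shows "germ_zero X res x U s"
proof -
  obtain W where "openin X W" "x \<in> W" "\<forall>V. openin X V \<and> x \<in> V \<and> V \<subseteq> W \<longrightarrow> restrictions U s V = 0"
    using assms(3) unfolding germ_kernel_def by blast
  moreover have "openin X (W \<inter> U)"
    using \<open>openin X W\<close> assms(1) by blast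
  ultimately have "res U (W \<inter> U) s = 0"
    using assms(2) unfolding restrictions_def by auto
  then show ?thesis
    unfolding germ_zero_def using \<open>openin X (W \<inter> U)\<close> \<open>x \<in> W\<close> assms(2) by blast
qed

definition germ_embedding :: "('a \<Rightarrow> ('a set \<Rightarrow> 'v) \<Rightarrow> 'a set \<Rightarrow> 'v) \<Rightarrow> 'a set \<Rightarrow> 'v \<Rightarrow> 'a \<Rightarrow> 'a set \<Rightarrow> 'v"
  where "germ_embedding P U s = (\<lambda>x. if x \<in> U then P x (restrictions U s) else 0)"

context
  fixes P :: "'a \<Rightarrow> ('a set \<Rightarrow> 'v) \<Rightarrow> 'a set \<Rightarrow> 'v"
  assumes P_linear: "\<And>x. x \<in> topspace X \<Longrightarrow>
      Vector_Spaces.linear (\<lambda>c g V. smul c (g V)) (\<lambda>c g V. smul c (g V)) (P x)"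
    and P_kernel: "\<And>x g. x \<in> topspace X \<Longrightarrow> P x g = 0 \<longleftrightarrow> g \<in> germ_kernel X x"
begin

lemma P_module_hom: "x \<in> topspace X \<Longrightarrow> module_hom (\<lambda>c g V. smul c (g V)) (\<lambda>c g V. smul c (g V)) (P x)"
  using P_linear module_hom_iff_linear by blast

lemma sheaf_hom_germ_embedding:
  "sheaf_hom X smul S res (\<lambda>c f x U. smul c (f x U)) point_sections point_restrict (germ_embedding P)"
  unfolding sheaf_hom_def
proof (intro conjI allI impI ballI)
  show "is_sheaf X smul S res"
    by (rule sheaf)
  show "is_sheaf X (\<lambda>c f x U. smul c (f x U)) point_sections point_restrict"
    by (rule is_sheaf_point_sections[OF vector_space_pointwise[OF vector_space]])
  fix U s assume U: "openin X U" and s: "s \<in> S U"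
  have x_top: "x \<in> topspace X" if "x \<in> U" for x
    using openin_subset[OF U] that by blast
  show "germ_embedding P U s \<in> point_sections U"
    unfolding germ_embedding_def point_sections_def by simp
  show "germ_embedding P U (s + t) = germ_embedding P U s + germ_embedding P U t" if "t \<in> S U" for t
  proof
    fix x
    show "germ_embedding P U (s + t) x = (germ_embedding P U s + germ_embedding P U t) x"
      using restrictions_add[OF U s that] module_hom.add[OF P_module_hom[OF x_top]]
      by (simp add: germ_embedding_def)
  qed
  show "germ_embedding P U (smul c s) = (\<lambda>x V. smul c (germ_embedding P U s x V))" for c
  proof
    fix x
    show "germ_embedding P U (smul c s) x = (\<lambda>V. smul c (germ_embedding P U s x V))"
    proof (cases "x \<in> U")
      case True
      then show ?thesis
        using restrictions_scale[OF U s] module_hom.scale[OF P_module_hom[OF x_top[OF True]]]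
        by (simp add: germ_embedding_def)
    qed (simp add: germ_embedding_def fun_eq_iff
        module.scale_zero_right[OF vector_space[folded module_iff_vector_space]])
  qed
next
  fix U V s assume UV: "openin X U \<and> openin X V \<and> V \<subseteq> U" and s: "s \<in> S U"
  have "P x (restrictions V (res U V s)) = P x (restrictions U s)" if "x \<in> V" for x
  proof -
    have x: "x \<in> topspace X"
      using UV openin_subset that by blast
    have "P x (restrictions V (res U V s) - restrictions U s) = 0"
      using P_kernel[OF x] restrictions_res_diff_in_germ_kernel[of U V s x] UV s that by blast
    then show ?thesis
      using module_hom.diff[OF P_module_hom[OF x]] by simp
  qed
  then show "germ_embedding P V (res U V s) = point_restrict U V (germ_embedding P U s)"
    using UV by (auto simp: fun_eq_iff germ_embedding_def point_restrict_def)
qed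

lemma stalk_injective_germ_embedding: "stalk_injective X S point_restrict res (germ_embedding P)"
  unfolding stalk_injective_def
proof (intro ballI allI impI)
  fix x U s assume x: "x \<in> topspace X" and s: "s \<in> S U"
    and germ: "openin X U \<and> x \<in> U \<and> germ_zero X point_restrict x U (germ_embedding P U s)"
  then obtain W where "x \<in> W" "W \<subseteq> U" "point_restrict U W (germ_embedding P U s) = 0"
    unfolding germ_zero_def by blast
  then have "point_restrict U W (germ_embedding P U s) x = 0"
    by simp
  then have "P x (restrictions U s) = 0"
    using \<open>x \<in> W\<close> \<open>W \<subseteq> U\<close> by (auto simp: point_restrict_def germ_embedding_def)
  then show "germ_zero X res x U s"
    using germ germ_zero_if_restrictions_in_germ_kernel P_kernel[OF x] by blast
qed

end

lemma ex_stalk_injective_hom_to_point_sections: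
  obtains \<phi> where
    "sheaf_hom X smul S res (\<lambda>c (f :: 'a \<Rightarrow> 'a set \<Rightarrow> 'v) x U. smul c (f x U))
      point_sections point_restrict \<phi>"
    "stalk_injective X S point_restrict res \<phi>"
proof -
  let ?smul = "\<lambda>c (g :: 'a set \<Rightarrow> 'v) V. smul c (g V)"
  have "\<forall>x\<in>topspace X. \<exists>p. Vector_Spaces.linear ?smul ?smul p \<and> (\<forall>g. p g = 0 \<longleftrightarrow> g \<in> germ_kernel X x)"
    using ex_linear_with_kernel[OF vector_space_pointwise[OF vector_space]
        subspace_germ_kernel[OF vector_space, where X = X]] by blast
  then obtain P where P: "\<forall>x\<in>topspace X. Vector_Spaces.linear ?smul ?smul (P x) \<and>
      (\<forall>g. P x g = 0 \<longleftrightarrow> g \<in> germ_kernel X x)"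
    by (rule bchoice[THEN exE])
  have P_linear: "\<And>x. x \<in> topspace X \<Longrightarrow> Vector_Spaces.linear ?smul ?smul (P x)"
    and P_kernel: "\<And>x g. x \<in> topspace X \<Longrightarrow> P x g = 0 \<longleftrightarrow> g \<in> germ_kernel X x"
    using P by blast+
  have "sheaf_hom X smul S res (\<lambda>c f x U. smul c (f x U)) point_sections point_restrict
      (germ_embedding P)"
    using P_linear P_kernel by (rule sheaf_hom_germ_embedding)
  moreover have "stalk_injective X S point_restrict res (germ_embedding P)"
    using P_linear P_kernel by (rule stalk_injective_germ_embedding)
  ultimately show thesis
    by (rule that)
qed

end

lemma (in lwqc_space) ex_stalk_injective_hom_to_c_soft:
  fixes smul :: "'k::field \<Rightarrow> 'v::ab_group_add \<Rightarrow> 'v"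
  assumes "is_sheaf X smul S res"
  shows "\<exists>(G :: 'a set \<Rightarrow> ('a \<Rightarrow> 'a set \<Rightarrow> 'v) set) resG \<phi>.
    sheaf_hom X smul S res (\<lambda>c f x U. smul c (f x U)) G resG \<phi> \<and>
    stalk_injective X S resG res \<phi> \<and> c_soft X G resG"
proof -
  interpret sheaf X smul S res
    by (rule sheaf.intro[OF assms])
  obtain \<phi> where "sheaf_hom X smul S res (\<lambda>c (f :: 'a \<Rightarrow> 'a set \<Rightarrow> 'v) x U. smul c (f x U))
      point_sections point_restrict \<phi>"
    "stalk_injective X S point_restrict res \<phi>"
    by (rule ex_stalk_injective_hom_to_point_sections)
  with c_soft_point_sections show ?thesis
    by blast
qed

section \<open>Short exact sequences\<close>

locale sheaf_morphism = source: sheaf X smul S res + target: sheaf X smul' S' res'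
  for X :: "'a topology" and smul :: "'k::field \<Rightarrow> 'v::ab_group_add \<Rightarrow> 'v" and S res
    and smul' :: "'k \<Rightarrow> 'w::ab_group_add \<Rightarrow> 'w" and S' res' +
  fixes h :: "'a set \<Rightarrow> 'v \<Rightarrow> 'w"
  assumes morphism: "sheaf_hom X smul S res smul' S' res' h"
begin

lemma map_in: "openin X U \<Longrightarrow> s \<in> S U \<Longrightarrow> h U s \<in> S' U"
  using morphism by (simp add: sheaf_hom_def)

lemma map_add: "openin X U \<Longrightarrow> s \<in> S U \<Longrightarrow> t \<in> S U \<Longrightarrow> h U (s + t) = h U s + h U t"
  using morphism by (simp add: sheaf_hom_def)

lemma map_res: "openin X U \<Longrightarrow> openin X V \<Longrightarrow> V \<subseteq> U \<Longrightarrow> s \<in> S U \<Longrightarrow> h V (res U V s) = res' U V (h U s)"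
  using morphism by (simp add: sheaf_hom_def)

lemma map_zero: "openin X U \<Longrightarrow> h U 0 = 0"
  using map_add[of U 0 0] source.zero_in[of U] by simp

lemma map_diff: "openin X U \<Longrightarrow> s \<in> S U \<Longrightarrow> t \<in> S U \<Longrightarrow> h U (s - t) = h U s - h U t"
  using map_add[of U "s - t" t] source.diff_in[of U s t] by (simp add: algebra_simps)

end

lemma sheaf_morphismI:
  assumes "sheaf_hom X smul S res smul' S' res' h"
  shows "sheaf_morphism X smul S res smul' S' res' h"
proof -
  have "is_sheaf X smul S res" "is_sheaf X smul' S' res'"
    using assms by (simp_all add: sheaf_hom_def)
  then show ?thesis
    using assms by (intro sheaf_morphism.intro sheaf_morphism_axioms.intro sheaf.intro)
qed

locale short_exact_sequence =
  F1: sheaf X smul1 S1 r1 + F2: sheaf X smul2 S2 r2 + F3: sheaf X smul3 S3 r3 +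
  phi: sheaf_morphism X smul1 S1 r1 smul2 S2 r2 \<phi> + psi: sheaf_morphism X smul2 S2 r2 smul3 S3 r3 \<psi>
  for X :: "'a topology"
    and smul1 :: "'k::field \<Rightarrow> 'u::ab_group_add \<Rightarrow> 'u" and S1 r1
    and smul2 :: "'k \<Rightarrow> 'w::ab_group_add \<Rightarrow> 'w" and S2 r2
    and smul3 :: "'k \<Rightarrow> 'z::ab_group_add \<Rightarrow> 'z" and S3 r3 and \<phi> \<psi> +
  assumes exact: "short_exact X smul1 S1 r1 smul2 S2 r2 smul3 S3 r3 \<phi> \<psi>"
begin

lemmas exact_unfolded = exact[unfolded short_exact_def, THEN conjunct2, THEN conjunct2]

lemma stalk_injective_phi: "stalk_injective X S1 r2 r1 \<phi>"
  by (rule exact_unfolded[THEN conjunct1])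

lemma germ_zero_comp:
  assumes "openin X U" "x \<in> U" "s \<in> S1 U"
  shows "germ_zero X r3 x U (\<psi> U (\<phi> U s))"
proof -
  have "x \<in> topspace X" "openin X U \<and> x \<in> U"
    using assms(1,2) openin_subset by blast+
  from exact_unfolded[THEN conjunct2, THEN conjunct1, rule_format, OF this(1) assms(3) this(2)]
  show ?thesis .
qed

lemma ex_germ_preimage:
  assumes "openin X U" "x \<in> U" "t \<in> S2 U" "germ_zero X r3 x U (\<psi> U t)"
  shows "\<exists>V. \<exists>s\<in>S1 V. openin X V \<and> x \<in> V \<and> germ_eq X r2 x V (\<phi> V s) U t"
proof -
  have "x \<in> topspace X" "openin X U \<and> x \<in> U \<and> germ_zero X r3 x U (\<psi> U t)"
    using assms openin_subset by blast+
  from exact_unfolded[THEN conjunct2, THEN conjunct2, THEN conjunct1, rule_format, OF this(1) assms(3) this(2)]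
  show ?thesis .
qed

lemma ex_germ_lift:
  assumes "openin X U" "x \<in> U" "u \<in> S3 U"
  shows "\<exists>V. \<exists>t\<in>S2 V. openin X V \<and> x \<in> V \<and> germ_eq X r3 x V (\<psi> V t) U u"
proof -
  have "x \<in> topspace X" "openin X U \<and> x \<in> U"
    using assms(1,2) openin_subset by blast+
  from exact_unfolded[THEN conjunct2, THEN conjunct2, THEN conjunct2, rule_format, OF this(1) assms(3) this(2)]
  show ?thesis .
qed

lemma comp_eq_zero: "openin X U \<Longrightarrow> s \<in> S1 U \<Longrightarrow> \<psi> U (\<phi> U s) = 0"
  by (rule F3.eq_zero_if_germs_zero) (auto intro: germ_zero_comp psi.map_in phi.map_in)

lemma inj_on_phi:
  assumes U: "openin X U"
  shows "inj_on (\<phi> U) (S1 U)"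
proof (rule inj_onI)
  fix a b assume a: "a \<in> S1 U" and b: "b \<in> S1 U" and eq: "\<phi> U a = \<phi> U b"
  have "a - b = 0"
  proof (rule F1.eq_zero_if_germs_zero[OF U F1.diff_in[OF U a b]])
    fix x assume x: "x \<in> U"
    have "\<phi> U (a - b) = 0"
      using phi.map_diff[OF U a b] eq by simp
    then have "germ_zero X r2 x U (\<phi> U (a - b))"
      unfolding germ_zero_def using U x F2.res_id[OF U F2.zero_in[OF U]] by auto
    with stalk_injective_phi show "germ_zero X r1 x U (a - b)"
      unfolding stalk_injective_def using U x openin_subset F1.diff_in[OF U a b] by blast
  qed
  then show "a = b"
    by simp
qed

lemma ex_local_preimage:
  assumes U: "openin X U" and x: "x \<in> U" and t: "t \<in> S2 U" and "\<psi> U t = 0"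
  obtains W s where "openin X W" "x \<in> W" "W \<subseteq> U" "s \<in> S1 W" "\<phi> W s = r2 U W t"
proof -
  have "germ_zero X r3 x U (\<psi> U t)"
    unfolding germ_zero_def \<open>\<psi> U t = 0\<close> using U x F3.res_id[OF U F3.zero_in[OF U]] by blast
  then obtain V s where s: "s \<in> S1 V" "openin X V" "germ_eq X r2 x V (\<phi> V s) U t"
    using ex_germ_preimage[OF U x t] by blast
  then obtain W where W: "openin X W" "x \<in> W" "W \<subseteq> V \<inter> U" "r2 V W (\<phi> V s) = r2 U W t"
    unfolding germ_eq_def by blast
  have "\<phi> W (r1 V W s) = r2 U W t"
    using phi.map_res[OF s(2) W(1) _ s(1)] W(3,4) by simp
  moreover have "r1 V W s \<in> S1 W"
    using F1.res_in[OF s(2) W(1) _ s(1)] W(3) by simp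
  ultimately show thesis
    using that W(1-3) by blast
qed

lemma in_range_phi_if_local:
  assumes U: "openin X U" and t: "t \<in> S2 U"
    and local: "\<And>x. x \<in> U \<Longrightarrow> \<exists>W. openin X W \<and> x \<in> W \<and> W \<subseteq> U \<and> (\<exists>s\<in>S1 W. \<phi> W s = r2 U W t)"
  obtains s where "s \<in> S1 U" "\<phi> U s = t"
proof -
  define \<U> where "\<U> = {W. openin X W \<and> W \<subseteq> U \<and> (\<exists>s\<in>S1 W. \<phi> W s = r2 U W t)}"
  define f where "f W = (SOME s. s \<in> S1 W \<and> \<phi> W s = r2 U W t)" for W
  have \<U>_open: "openin X W \<and> W \<subseteq> U" if "W \<in> \<U>" for W
    using that unfolding \<U>_def by blast
  have \<U>_cover: "\<Union>\<U> = U"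
    using local unfolding \<U>_def by blast
  have f: "f W \<in> S1 W" "\<phi> W (f W) = r2 U W t" if "W \<in> \<U>" for W
    using someI_ex[of "\<lambda>s. s \<in> S1 W \<and> \<phi> W s = r2 U W t"] that unfolding \<U>_def f_def by blast+
  have f_compatible: "r1 W (W \<inter> W') (f W) = r1 W' (W \<inter> W') (f W')" if "W \<in> \<U>" "W' \<in> \<U>" for W W'
  proof -
    have W: "openin X W" "W \<subseteq> U" and W': "openin X W'" "W' \<subseteq> U" and WW': "openin X (W \<inter> W')"
      using \<U>_open that by blast+
    have "\<phi> (W \<inter> W') (r1 W (W \<inter> W') (f W)) = r2 U (W \<inter> W') t"
      using phi.map_res[OF W(1) WW' _ f(1)[OF that(1)]] f(2)[OF that(1)] F2.res_trans[OF U W(1) WW' _ W(2) t]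
      by simp
    moreover have "\<phi> (W \<inter> W') (r1 W' (W \<inter> W') (f W')) = r2 U (W \<inter> W') t"
      using phi.map_res[OF W'(1) WW' _ f(1)[OF that(2)]] f(2)[OF that(2)] F2.res_trans[OF U W'(1) WW' _ W'(2) t]
      by simp
    ultimately show ?thesis
      using inj_onD[OF inj_on_phi[OF WW']] F1.res_in[OF W(1) WW'] F1.res_in[OF W'(1) WW'] f(1) that
      by simp
  qed
  obtain s where s: "s \<in> S1 U" "\<And>W. W \<in> \<U> \<Longrightarrow> r1 U W s = f W"
    by (rule F1.ex_glued[OF U \<U>_open \<U>_cover f(1) f_compatible]) auto
  have "\<phi> U s = t"
  proof (rule F2.eq_if_res_eq[OF U \<U>_open \<U>_cover phi.map_in[OF U s(1)] t])
    fix W assume "W \<in> \<U>"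
    then show "r2 U W (\<phi> U s) = r2 U W t"
      using phi.map_res[OF U, of W s] \<U>_open s f(2) by simp
  qed
  then show thesis
    using that s(1) by blast
qed

lemma ker_psi_subset_range_phi:
  assumes U: "openin X U" and t: "t \<in> S2 U" and "\<psi> U t = 0"
  obtains s where "s \<in> S1 U" "\<phi> U s = t"
proof (rule in_range_phi_if_local[OF U t])
  fix x assume "x \<in> U"
  then obtain W s where "openin X W" "x \<in> W" "W \<subseteq> U" "s \<in> S1 W" "\<phi> W s = r2 U W t"
    using ex_local_preimage[OF U _ t \<open>\<psi> U t = 0\<close>] by metis
  then show "\<exists>W. openin X W \<and> x \<in> W \<and> W \<subseteq> U \<and> (\<exists>s\<in>S1 W. \<phi> W s = r2 U W t)"
    by blast
qed

lemma ex_local_lift: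
  assumes U: "openin X U" and x: "x \<in> U" and u: "u \<in> S3 U"
  obtains W t where "openin X W" "x \<in> W" "W \<subseteq> U" "t \<in> S2 W" "\<psi> W t = r3 U W u"
proof -
  obtain V t where t: "t \<in> S2 V" "openin X V" "germ_eq X r3 x V (\<psi> V t) U u"
    using ex_germ_lift[OF U x u] by blast
  then obtain W where W: "openin X W" "x \<in> W" "W \<subseteq> V \<inter> U" "r3 V W (\<psi> V t) = r3 U W u"
    unfolding germ_eq_def by blast
  have "\<psi> W (r2 V W t) = r3 U W u"
    using psi.map_res[OF t(2) W(1) _ t(1)] W(3,4) by simp
  moreover have "r2 V W t \<in> S2 W"
    using F2.res_in[OF t(2) W(1) _ t(1)] W(3) by simp
  ultimately show thesis
    using that W(1-3) by blast
qed

definition is_lift :: "'a set \<Rightarrow> 'z \<Rightarrow> 'a set \<Rightarrow> 'w \<Rightarrow> bool" where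
  "is_lift U u W t \<longleftrightarrow> openin X W \<and> W \<subseteq> U \<and> t \<in> S2 W \<and> \<psi> W t = r3 U W u"

lemma is_lift_res:
  assumes U: "openin X U" "u \<in> S3 U" and lift: "is_lift U u A t" and "openin X A'" "A' \<subseteq> A"
  shows "is_lift U u A' (r2 A A' t)"
proof -
  have A: "openin X A" "A \<subseteq> U" "t \<in> S2 A" "\<psi> A t = r3 U A u"
    using lift unfolding is_lift_def by blast+
  have "\<psi> A' (r2 A A' t) = r3 A A' (\<psi> A t)"
    by (rule psi.map_res[OF A(1) assms(4,5) A(3)])
  also have "\<dots> = r3 U A' u"
    using A(4) F3.res_trans[OF U(1) A(1) assms(4,5) A(2) U(2)] by simp
  finally show ?thesis
    unfolding is_lift_def using A assms(4,5) F2.res_in[OF A(1) assms(4,5) A(3)] by blast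
qed

lemma is_lift_add_phi:
  assumes lift: "is_lift U u A t" and e: "e \<in> S1 A"
  shows "is_lift U u A (t + \<phi> A e)"
proof -
  have A: "openin X A" "A \<subseteq> U" "t \<in> S2 A" "\<psi> A t = r3 U A u"
    using lift unfolding is_lift_def by blast+
  have "\<psi> A (t + \<phi> A e) = r3 U A u"
    using psi.map_add[OF A(1) A(3) phi.map_in[OF A(1) e]] comp_eq_zero[OF A(1) e] A(4) by simp
  then show ?thesis
    unfolding is_lift_def using A F2.add_in[OF A(1) A(3) phi.map_in[OF A(1) e]] by blast
qed

lemma is_lift_if_local:
  assumes U: "openin X U" "u \<in> S3 U" and W: "openin X W" "W \<subseteq> U" "t \<in> S2 W"
    and \<U>: "\<And>V. V \<in> \<U> \<Longrightarrow> openin X V \<and> V \<subseteq> W" "\<Union>\<U> = W"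
    and local: "\<And>V. V \<in> \<U> \<Longrightarrow> is_lift U u V (r2 W V t)"
  shows "is_lift U u W t"
proof -
  have "\<psi> W t = r3 U W u"
  proof (rule F3.eq_if_res_eq[OF W(1) \<U> psi.map_in[OF W(1) W(3)] F3.res_in[OF U(1) W(1,2) U(2)]])
    fix V assume V: "V \<in> \<U>"
    have "r3 W V (\<psi> W t) = \<psi> V (r2 W V t)"
      using psi.map_res[OF W(1) _ _ W(3)] \<U>(1)[OF V] by simp
    also have "\<dots> = r3 U V u"
      using local[OF V] unfolding is_lift_def by blast
    also have "\<dots> = r3 W V (r3 U W u)"
      using F3.res_trans[OF U(1) W(1) _ _ W(2) U(2)] \<U>(1)[OF V] by simp
    finally show "r3 W V (\<psi> W t) = r3 W V (r3 U W u)" .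
  qed
  then show ?thesis
    unfolding is_lift_def using W by blast
qed

lemma ex_phi_eq_diff_lifts:
  assumes "is_lift U u A a" "is_lift U u A b"
  obtains d where "d \<in> S1 A" "\<phi> A d = a - b"
proof -
  have A: "openin X A" "a \<in> S2 A" "b \<in> S2 A" "\<psi> A a = \<psi> A b"
    using assms unfolding is_lift_def by auto
  then have "\<psi> A (a - b) = 0"
    using psi.map_diff by simp
  then show thesis
    using ker_psi_subset_range_phi[OF A(1) F2.diff_in[OF A(1-3)]] that by blast
qed

end

lemma short_exact_sequenceI:
  assumes "short_exact X smul1 S1 r1 smul2 S2 r2 smul3 S3 r3 \<phi> \<psi>"
  shows "short_exact_sequence X smul1 S1 r1 smul2 S2 r2 smul3 S3 r3 \<phi> \<psi>"
proof -
  have "sheaf_morphism X smul1 S1 r1 smul2 S2 r2 \<phi>" "sheaf_morphism X smul2 S2 r2 smul3 S3 r3 \<psi>"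
    using assms by (simp_all add: short_exact_def sheaf_morphismI)
  then show ?thesis
    using assms by (intro short_exact_sequence.intro short_exact_sequence_axioms.intro)
      (simp_all add: sheaf_morphism_def)
qed

section \<open>Lifting sections through a c-soft kernel\<close>

locale c_soft_kernel_sequence =
  lwqc_space X + short_exact_sequence X smul1 S1 r1 smul2 S2 r2 smul3 S3 r3 \<phi> \<psi>
  for X :: "'a topology"
    and smul1 :: "'k::field \<Rightarrow> 'u::ab_group_add \<Rightarrow> 'u" and S1 r1
    and smul2 :: "'k \<Rightarrow> 'w::ab_group_add \<Rightarrow> 'w" and S2 r2
    and smul3 :: "'k \<Rightarrow> 'z::ab_group_add \<Rightarrow> 'z" and S3 r3 and \<phi> \<psi> +
  assumes c_soft_kernel: "c_soft X S1 r1"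
begin

text \<open>Two lifts differ by a section of the kernel, which c-softness extends from a neighbourhood of
  a relatively compact set to all of \<open>B'\<close>; correcting the second lift by it makes the lifts agree.\<close>
lemma lift_correction:
  assumes U: "openin X U" "u \<in> S3 U" and a: "is_lift U u A a" and b: "is_lift U u B b"
    and I: "compactly_in X I (topspace X)" "compactly_in X I B'" "compactly_in X I (A \<inter> B)"
    and B': "compactly_in X B' (topspace X)" "B' \<subseteq> B"
  obtains b' where "is_lift U u B' b'" "r2 B' I b' = r2 A I a"
proof -
  have A: "openin X A" "a \<in> S2 A" and B: "openin X B" "b \<in> S2 B"
    using a b unfolding is_lift_def by blast+
  have opens: "openin X (A \<inter> B)" "openin X B'" "openin X I" "I \<subseteq> A \<inter> B" "I \<subseteq> B'"
    using compactly_inD I B' by blast+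
  obtain d where d: "d \<in> S1 (A \<inter> B)" "\<phi> (A \<inter> B) d = r2 A (A \<inter> B) a - r2 B (A \<inter> B) b"
    using ex_phi_eq_diff_lifts is_lift_res[OF U a opens(1)] is_lift_res[OF U b opens(1)] by blast
  obtain e where e: "e \<in> S1 B'" "r1 B' I e = r1 (A \<inter> B) I d"
    using F1.c_soft_extend[OF c_soft_kernel I(1) B'(1) I(2) I(3) d(1)] by blast
  define b' where "b' = r2 B B' b + \<phi> B' e"
  have "is_lift U u B' b'"
    unfolding b'_def using is_lift_add_phi[OF is_lift_res[OF U b opens(2) B'(2)] e(1)] .
  moreover have "r2 B' I b' = r2 A I a"
  proof -
    have "r2 B' I (\<phi> B' e) = \<phi> I (r1 (A \<inter> B) I d)"
      using phi.map_res[OF opens(2,3,5) e(1)] e(2) by simp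
    also have "\<dots> = r2 (A \<inter> B) I (r2 A (A \<inter> B) a - r2 B (A \<inter> B) b)"
      using phi.map_res[OF opens(1,3,4) d(1)] d(2) by simp
    also have "\<dots> = r2 A I a - r2 B I b"
      using F2.res_diff[OF opens(1,3,4)] F2.res_in[OF A(1) opens(1) _ A(2)] F2.res_in[OF B(1) opens(1) _ B(2)]
        F2.res_trans[OF A(1) opens(1,3,4) _ A(2)] F2.res_trans[OF B(1) opens(1,3,4) _ B(2)] by simp
    finally have "r2 B' I (\<phi> B' e) = r2 A I a - r2 B I b" .
    moreover have "r2 B' I (r2 B B' b) = r2 B I b"
      using F2.res_trans[OF B(1) opens(2,3,5) B'(2) B(2)] .
    ultimately show ?thesis
      unfolding b'_def
      using F2.res_add[OF opens(2,3,5) F2.res_in[OF B(1) opens(2) B'(2) B(2)] phi.map_in[OF opens(2) e(1)]]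
      by simp
  qed
  ultimately show thesis
    by (rule that)
qed

lemma lift_glue_Un:
  assumes U: "openin X U" "u \<in> S3 U" and a: "is_lift U u A a" and b: "is_lift U u B b"
    and compatible: "r2 A (A \<inter> B) a = r2 B (A \<inter> B) b"
  obtains t where "is_lift U u (A \<union> B) t"
proof -
  have A: "openin X A" "A \<subseteq> U" "a \<in> S2 A" and B: "openin X B" "B \<subseteq> U" "b \<in> S2 B"
    using a b unfolding is_lift_def by blast+
  obtain t where t: "t \<in> S2 (A \<union> B)" "r2 (A \<union> B) A t = a" "r2 (A \<union> B) B t = b"
    by (rule F2.ex_glued_Un[OF A(1,3) B(1,3) compatible])
  have "is_lift U u (A \<union> B) t"
  proof (rule is_lift_if_local[OF U _ _ t(1), of "{A, B}"])
    show "is_lift U u V (r2 (A \<union> B) V t)" if "V \<in> {A, B}" for V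
      using that t(2,3) a b by auto
  qed (use A B in auto)
  then show thesis
    by (rule that)
qed

lemma lift_Un:
  assumes U: "openin X U" "u \<in> S3 U" and a: "is_lift U u A a" and b: "is_lift U u B b"
    and K: "compactly_in X K\<^sub>A A" "compactly_in X K\<^sub>B B"
  obtains \<Omega> t where "compactly_in X (K\<^sub>A \<union> K\<^sub>B) \<Omega>" "\<Omega> \<subseteq> A \<union> B" "is_lift U u \<Omega> t"
proof -
  obtain A\<^sub>1 where A\<^sub>1: "compactly_in X A\<^sub>1 A" "compactly_in X K\<^sub>A A\<^sub>1"
    using compactly_in_interpolate[OF K(1)] .
  obtain B\<^sub>1 where B\<^sub>1: "compactly_in X B\<^sub>1 B" "compactly_in X K\<^sub>B B\<^sub>1"
    using compactly_in_interpolate[OF K(2)] .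
  obtain B\<^sub>2 where B\<^sub>2: "compactly_in X B\<^sub>2 B" "compactly_in X B\<^sub>1 B\<^sub>2"
    using compactly_in_interpolate[OF B\<^sub>1(1)] .
  have opens: "openin X A\<^sub>1" "openin X B\<^sub>1" "openin X B\<^sub>2" "A\<^sub>1 \<subseteq> A" "B\<^sub>1 \<subseteq> B\<^sub>2" "B\<^sub>2 \<subseteq> B"
    using compactly_inD A\<^sub>1(1) B\<^sub>2 by blast+
  have "compactly_in X (A\<^sub>1 \<inter> B\<^sub>1) (topspace X \<inter> B\<^sub>2)"
    using compactly_in_Int[OF compactly_in_topspace[OF A\<^sub>1(1)] B\<^sub>2(2)] .
  then have I: "compactly_in X (A\<^sub>1 \<inter> B\<^sub>1) B\<^sub>2" "compactly_in X (A\<^sub>1 \<inter> B\<^sub>1) (topspace X)"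
    using openin_subset[OF opens(3)] compactly_in_topspace by (simp_all add: Int_absorb1)
  obtain b' where b': "is_lift U u B\<^sub>2 b'" "r2 B\<^sub>2 (A\<^sub>1 \<inter> B\<^sub>1) b' = r2 A (A\<^sub>1 \<inter> B\<^sub>1) a"
    by (rule lift_correction[OF U a b I(2,1) compactly_in_Int[OF A\<^sub>1(1) B\<^sub>1(1)]
          compactly_in_topspace[OF B\<^sub>2(1)] opens(6)])
  have A: "openin X A" "a \<in> S2 A" and B\<^sub>2': "b' \<in> S2 B\<^sub>2"
    using a b' unfolding is_lift_def by blast+
  have "openin X (A\<^sub>1 \<inter> B\<^sub>1)"
    using opens by blast
  then have "r2 A\<^sub>1 (A\<^sub>1 \<inter> B\<^sub>1) (r2 A A\<^sub>1 a) = r2 B\<^sub>1 (A\<^sub>1 \<inter> B\<^sub>1) (r2 B\<^sub>2 B\<^sub>1 b')"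
    using F2.res_trans[OF A(1) opens(1) _ _ opens(4) A(2)]
      F2.res_trans[OF opens(3,2) _ _ opens(5) B\<^sub>2'] b'(2) by simp
  then obtain t where "is_lift U u (A\<^sub>1 \<union> B\<^sub>1) t"
    by (rule lift_glue_Un[OF U is_lift_res[OF U a opens(1,4)] is_lift_res[OF U b'(1) opens(2,5)]])
  moreover have "compactly_in X (K\<^sub>A \<union> K\<^sub>B) (A\<^sub>1 \<union> B\<^sub>1)"
    using openin_Un[OF opens(1,2)]
    by (intro compactly_in_Un compactly_in_superset[OF A\<^sub>1(2)] compactly_in_superset[OF B\<^sub>1(2)]) auto
  moreover have "A\<^sub>1 \<union> B\<^sub>1 \<subseteq> A \<union> B"
    using opens by blast
  ultimately show thesis
    using that by blast
qed

lemma lift_Union: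
  assumes U: "openin X U" "u \<in> S3 U" and "finite \<A>" and "\<And>A. A \<in> \<A> \<Longrightarrow> \<exists>t. is_lift U u A t"
    and "compactly_in X K (\<Union>\<A>)"
  shows "\<exists>\<Omega> t. compactly_in X K \<Omega> \<and> \<Omega> \<subseteq> \<Union>\<A> \<and> is_lift U u \<Omega> t"
  using assms(3-5)
proof (induction \<A> arbitrary: K rule: finite_induct)
  case empty
  then have "K = {}"
    using compactly_inD[OF empty.prems(2)] by simp
  moreover have "is_lift U u {} 0"
    unfolding is_lift_def using F2.zero_in[of "{}"] psi.map_zero[of "{}"] F3.res_empty[OF U] by simp
  ultimately show ?case
    using compactly_in_empty[of X "{}"] by auto
next
  case (insert A \<A>)
  obtain a where a: "is_lift U u A a"
    using insert.prems(1) by blast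
  have opens: "openin X A" "openin X (\<Union>\<A>)"
    using a insert.prems(1) unfolding is_lift_def by (blast intro: openin_Union)+
  obtain K\<^sub>A K\<^sub>B where KAB: "compactly_in X K\<^sub>A A" "compactly_in X K\<^sub>B (\<Union>\<A>)" "K \<subseteq> K\<^sub>A \<union> K\<^sub>B"
    using compactly_in_Un_split[OF _ opens] insert.prems(2) by (metis Union_insert)
  obtain \<Omega>\<^sub>B b where B: "compactly_in X K\<^sub>B \<Omega>\<^sub>B" "\<Omega>\<^sub>B \<subseteq> \<Union>\<A>" "is_lift U u \<Omega>\<^sub>B b"
    using insert.IH[OF _ KAB(2)] insert.prems(1) by blast
  obtain \<Omega> t where \<Omega>: "compactly_in X (K\<^sub>A \<union> K\<^sub>B) \<Omega>" "\<Omega> \<subseteq> A \<union> \<Omega>\<^sub>B" "is_lift U u \<Omega> t"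
    by (rule lift_Un[OF U a B(3) KAB(1) B(1)])
  have "compactly_in X K \<Omega>"
    using compactly_in_subset[OF \<Omega>(1) KAB(3)] compactly_inD(1)[OF insert.prems(2)] by blast
  moreover have "\<Omega> \<subseteq> \<Union>(insert A \<A>)"
    using \<Omega>(2) B(2) by auto
  ultimately show ?case
    using \<Omega>(3) by blast
qed

lemma lift_near_compactly_in:
  assumes U: "openin X U" "u \<in> S3 U" and V: "compactly_in X V U"
  obtains \<Omega> t where "compactly_in X V \<Omega>" "\<Omega> \<subseteq> U" "is_lift U u \<Omega> t"
proof -
  obtain V' where V': "compactly_in X V' U" "compactly_in X V V'"
    using compactly_in_interpolate[OF V] .
  define \<U> where "\<U> = {W. \<exists>t. is_lift U u W t}"
  have \<U>_open: "openin X W \<and> W \<subseteq> U" if "W \<in> \<U>" for W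
    using that unfolding \<U>_def is_lift_def by blast
  have "\<Union>\<U> = U"
  proof
    show "\<Union>\<U> \<subseteq> U"
      using \<U>_open by blast
    show "U \<subseteq> \<Union>\<U>"
    proof
      fix x assume "x \<in> U"
      then obtain W t where "openin X W" "x \<in> W" "W \<subseteq> U" "t \<in> S2 W" "\<psi> W t = r3 U W u"
        using ex_local_lift[OF U(1) _ U(2)] by metis
      then show "x \<in> \<Union>\<U>"
        unfolding \<U>_def is_lift_def by blast
    qed
  qed
  with \<U>_open obtain \<J> where \<J>: "finite \<J>" "\<J> \<subseteq> \<U>" "V' \<subseteq> \<Union>\<J>"
    by (rule compactly_in_finite_subcover[OF V'(1)])
  have "openin X (\<Union>\<J>)"
    using \<J>(2) \<U>_open by (blast intro: openin_Union)
  then have V_\<J>: "compactly_in X V (\<Union>\<J>)"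
    using compactly_in_superset[OF V'(2) \<J>(3)] by blast
  have "\<And>A. A \<in> \<J> \<Longrightarrow> \<exists>t. is_lift U u A t"
    using \<J>(2) unfolding \<U>_def by blast
  from lift_Union[OF U \<J>(1) this V_\<J>]
  obtain \<Omega> t where \<Omega>: "compactly_in X V \<Omega>" "\<Omega> \<subseteq> \<Union>\<J>" "is_lift U u \<Omega> t"
    by blast
  have "\<Union>\<J> \<subseteq> U"
    using \<J>(2) \<U>_open by auto
  with \<Omega>(2) have "\<Omega> \<subseteq> U"
    by (rule subset_trans)
  show thesis
    by (rule that[OF \<Omega>(1) \<open>\<Omega> \<subseteq> U\<close> \<Omega>(3)])
qed

lemma c_soft_cokernel:
  assumes c_soft_middle: "c_soft X S2 r2"
  shows "c_soft X S3 r3"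
  unfolding c_soft_def
proof (intro allI impI ballI)
  fix V W U u
  assume VW: "compactly_in X V (topspace X) \<and> compactly_in X W (topspace X) \<and> compactly_in X V W"
    and u: "u \<in> S3 U" and VU: "compactly_in X V U"
  have U: "openin X U" and W: "openin X W"
    using compactly_inD VU VW by blast+
  obtain \<Omega> t where \<Omega>: "compactly_in X V \<Omega>" "\<Omega> \<subseteq> U" "is_lift U u \<Omega> t"
    by (rule lift_near_compactly_in[OF U u VU])
  have t: "openin X \<Omega>" "t \<in> S2 \<Omega>" "\<psi> \<Omega> t = r3 U \<Omega> u"
    using \<Omega>(3) unfolding is_lift_def by blast+
  obtain t' U'' where t': "t' \<in> S2 W" "compactly_in X V U''" "U'' \<subseteq> \<Omega> \<inter> W" "r2 \<Omega> U'' t = r2 W U'' t'"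
    using c_soft_middle[unfolded c_soft_def, rule_format, OF VW t(2) \<Omega>(1)] by blast
  have U'': "openin X U''"
    using compactly_inD(2)[OF t'(2)] .
  have "r3 U U'' u = r3 \<Omega> U'' (r3 U \<Omega> u)"
    using F3.res_trans[OF U t(1) U'' _ \<Omega>(2) u] t'(3) by simp
  also have "\<dots> = \<psi> U'' (r2 \<Omega> U'' t)"
    using psi.map_res[OF t(1) U'' _ t(2)] t'(3) t(3) by simp
  also have "\<dots> = r3 W U'' (\<psi> W t')"
    using psi.map_res[OF W U'' _ t'(1)] t'(3,4) by simp
  finally have "r3 U U'' u = r3 W U'' (\<psi> W t')" .
  moreover have "U'' \<subseteq> U \<inter> W"
    using t'(3) \<Omega>(2) by blast
  ultimately show "\<exists>t\<in>S3 W. \<exists>U''. compactly_in X V U'' \<and> U'' \<subseteq> U \<inter> W \<and> r3 U U'' u = r3 W U'' t"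
    using psi.map_in[OF W t'(1)] t'(2) by blast
qed

lemma lift_extension:
  assumes u: "u \<in> S3 (topspace X)" and r: "is_lift (topspace X) u W\<^sub>1 r"
    and W: "compactly_in X W\<^sub>0 W\<^sub>1" "compactly_in X W\<^sub>1 W\<^sub>2"
      "compactly_in X W\<^sub>0 (topspace X)" "compactly_in X W\<^sub>2 (topspace X)"
  obtains r' where "is_lift (topspace X) u W\<^sub>2 r'" "r2 W\<^sub>2 W\<^sub>0 r' = r2 W\<^sub>1 W\<^sub>0 r"
proof -
  have T: "openin X (topspace X)"
    by simp
  obtain \<Omega> q where q: "compactly_in X W\<^sub>2 \<Omega>" "is_lift (topspace X) u \<Omega> q"
    using lift_near_compactly_in[OF T u W(4)] by blast
  have "openin X W\<^sub>2" "W\<^sub>2 \<subseteq> \<Omega>" "W\<^sub>1 \<subseteq> W\<^sub>2"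
    using compactly_inD q(1) W(2) by blast+
  then have q': "is_lift (topspace X) u W\<^sub>2 (r2 \<Omega> W\<^sub>2 q)"
    using is_lift_res[OF T u q(2)] by blast
  have "compactly_in X W\<^sub>0 W\<^sub>2"
    using compactly_in_superset[OF W(1) \<open>W\<^sub>1 \<subseteq> W\<^sub>2\<close> \<open>openin X W\<^sub>2\<close>] .
  moreover have "compactly_in X W\<^sub>0 (W\<^sub>1 \<inter> W\<^sub>2)"
    using W(1) \<open>W\<^sub>1 \<subseteq> W\<^sub>2\<close> by (simp add: Int_absorb2)
  ultimately obtain r' where "is_lift (topspace X) u W\<^sub>2 r'" "r2 W\<^sub>2 W\<^sub>0 r' = r2 W\<^sub>1 W\<^sub>0 r"
    using lift_correction[OF T u r q' W(3)] W(4) by blast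
  then show thesis
    by (rule that)
qed

lemma ex_compatible_lifts:
  assumes u: "u \<in> S3 (topspace X)"
    and W: "\<And>n. compactly_in X (W n) (topspace X)" "\<And>n. compactly_in X (W n) (W (Suc n))"
  obtains g where "\<And>n. is_lift (topspace X) u (W n) (g n)"
    "\<And>n. r2 (W (Suc n)) (W n) (g (Suc n)) = g n"
proof -
  let ?T = "topspace X"
  have T: "openin X ?T"
    by simp
  have W_open: "openin X (W n)" and W_mono: "W n \<subseteq> W (Suc n)" for n
    using compactly_inD W(2) by blast+
  \<comment> \<open>lifts on \<open>W (Suc n)\<close> that agree on \<open>W n\<close>; the lifts on \<open>W n\<close> they induce are then compatible\<close>
  have "\<exists>R. \<forall>n. is_lift ?T u (W (Suc n)) (R n) \<and>
      r2 (W (Suc (Suc n))) (W n) (R (Suc n)) = r2 (W (Suc n)) (W n) (R n)"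
  proof (rule dependent_nat_choice)
    obtain \<Omega> t where "compactly_in X (W 1) \<Omega>" "is_lift ?T u \<Omega> t"
      using lift_near_compactly_in[OF T u W(1)] by blast
    then show "\<exists>r. is_lift ?T u (W (Suc 0)) r"
      using is_lift_res[OF T u] W_open compactly_inD(3) by (metis One_nat_def)
    fix r n assume "is_lift ?T u (W (Suc n)) r"
    from lift_extension[OF u this W(2) W(2) W(1) W(1)]
    show "\<exists>r'. is_lift ?T u (W (Suc (Suc n))) r' \<and>
        r2 (W (Suc (Suc n))) (W n) r' = r2 (W (Suc n)) (W n) r"
      by blast
  qed
  then obtain R where R: "\<And>n. is_lift ?T u (W (Suc n)) (R n)"
    "\<And>n. r2 (W (Suc (Suc n))) (W n) (R (Suc n)) = r2 (W (Suc n)) (W n) (R n)"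
    by blast
  define g where "g n = r2 (W (Suc n)) (W n) (R n)" for n
  have "is_lift ?T u (W n) (g n)" for n
    unfolding g_def using is_lift_res[OF T u R(1) W_open W_mono] .
  moreover have "r2 (W (Suc n)) (W n) (g (Suc n)) = g n" for n
    using F2.res_trans[OF W_open W_open W_open W_mono W_mono, of "R (Suc n)"] R(1)[of "Suc n"] R(2)
    unfolding g_def is_lift_def by simp
  ultimately show thesis
    by (rule that)
qed

lemma ex_global_lift:
  assumes cover: "\<exists>C :: nat \<Rightarrow> 'a set. (\<forall>n. compactly_in X (C n) (topspace X)) \<and> (\<Union>n. C n) = topspace X"
    and u: "u \<in> S3 (topspace X)"
  obtains t where "t \<in> S2 (topspace X)" "\<psi> (topspace X) t = u"
proof -
  let ?T = "topspace X"
  have T: "openin X ?T"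
    by simp
  obtain W where W: "\<And>n. compactly_in X (W n) ?T" "\<And>n. compactly_in X (W n) (W (Suc n))"
    "(\<Union>n. W n) = ?T"
    using exhausting_sequence[OF cover] by blast
  have W_open: "openin X (W n)" and W_mono: "W n \<subseteq> W (Suc n)" for n
    using compactly_inD W(2) by blast+
  obtain g where g: "\<And>n. is_lift ?T u (W n) (g n)" "\<And>n. r2 (W (Suc n)) (W n) (g (Suc n)) = g n"
    by (rule ex_compatible_lifts[of u W, OF u W(1,2)]) auto
  have g_in: "g n \<in> S2 (W n)" for n
    using g(1) unfolding is_lift_def by blast
  obtain t where t: "t \<in> S2 ?T" "\<And>n. r2 ?T (W n) t = g n"
    using F2.ex_glued_increasing[of W g, OF W_open W_mono g_in g(2)] W(3) by auto
  have "is_lift ?T u ?T t"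
  proof (rule is_lift_if_local[OF T u T _ t(1) _ W(3)])
    show "openin X V \<and> V \<subseteq> ?T" if "V \<in> range W" for V
      using that W_open W(3) by blast
    show "is_lift ?T u V (r2 ?T V t)" if "V \<in> range W" for V
      using that t(2) g(1) by auto
  qed simp
  then have "t \<in> S2 ?T" "\<psi> ?T t = u"
    using F3.res_id[OF T u] unfolding is_lift_def by simp_all
  then show thesis
    by (rule that)
qed

lemma global_sections_exact:
  assumes "\<exists>C :: nat \<Rightarrow> 'a set. (\<forall>n. compactly_in X (C n) (topspace X)) \<and> (\<Union>n. C n) = topspace X"
  shows "global_sections_exact X S1 S2 S3 \<phi> \<psi>"
proof -
  let ?T = "topspace X"
  have T: "openin X ?T"
    by simp
  have "\<phi> ?T ` S1 ?T = {t \<in> S2 ?T. \<psi> ?T t = 0}"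
  proof
    show "\<phi> ?T ` S1 ?T \<subseteq> {t \<in> S2 ?T. \<psi> ?T t = 0}"
      using phi.map_in[OF T] comp_eq_zero[OF T] by blast
    show "{t \<in> S2 ?T. \<psi> ?T t = 0} \<subseteq> \<phi> ?T ` S1 ?T"
    proof
      fix t assume "t \<in> {t \<in> S2 ?T. \<psi> ?T t = 0}"
      then obtain s where "s \<in> S1 ?T" "\<phi> ?T s = t"
        using ker_psi_subset_range_phi[OF T] by blast
      then show "t \<in> \<phi> ?T ` S1 ?T"
        by blast
    qed
  qed
  moreover have "\<psi> ?T ` S2 ?T = S3 ?T"
  proof
    show "\<psi> ?T ` S2 ?T \<subseteq> S3 ?T"
      using psi.map_in[OF T] by blast
    show "S3 ?T \<subseteq> \<psi> ?T ` S2 ?T"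
    proof
      fix u assume "u \<in> S3 ?T"
      then obtain t where "t \<in> S2 ?T" "\<psi> ?T t = u"
        by (rule ex_global_lift[OF assms])
      then show "u \<in> \<psi> ?T ` S2 ?T"
        by blast
    qed
  qed
  ultimately show ?thesis
    unfolding global_sections_exact_def Let_def using inj_on_phi[OF T] by blast
qed

end

lemma c_soft_kernel_sequenceI:
  assumes "locally_weakly_quasi_compact X" "short_exact X smul1 S1 r1 smul2 S2 r2 smul3 S3 r3 \<phi> \<psi>"
    "c_soft X S1 r1"
  shows "c_soft_kernel_sequence X smul1 S1 r1 smul2 S2 r2 smul3 S3 r3 \<phi> \<psi>"
  using assms
  by (intro c_soft_kernel_sequence.intro lwqc_space.intro short_exact_sequenceI
      c_soft_kernel_sequence_axioms.intro)

theorem mainTheorem20: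
  fixes X :: "'a topology"
  assumes lwqc: "locally_weakly_quasi_compact X"
    and cover: "\<exists>Uc :: nat \<Rightarrow> 'a set. (\<forall>n. compactly_in X (Uc n) (topspace X)) \<and>
                   (\<Union>n. Uc n) = topspace X"
  shows
    "(\<forall>(sc :: 'k::field \<Rightarrow> 'v::ab_group_add \<Rightarrow> 'v) S res. is_sheaf X sc S res \<longrightarrow>
        (\<exists>(G :: 'a set \<Rightarrow> ('a \<Rightarrow> 'a set \<Rightarrow> 'v) set) resG \<phi>.
           sheaf_hom X sc S res (\<lambda>c f x U. sc c (f x U)) G resG \<phi> \<and>
           stalk_injective X S resG res \<phi> \<and> c_soft X G resG))
   \<and> (\<forall>(sc1 :: 'k \<Rightarrow> 'u::ab_group_add \<Rightarrow> 'u) S1 r1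
        (sc2 :: 'k \<Rightarrow> 'w::ab_group_add \<Rightarrow> 'w) S2 r2
        (sc3 :: 'k \<Rightarrow> 'z::ab_group_add \<Rightarrow> 'z) S3 r3 \<phi> \<psi>.
        short_exact X sc1 S1 r1 sc2 S2 r2 sc3 S3 r3 \<phi> \<psi> \<and> c_soft X S1 r1 \<and> c_soft X S2 r2
          \<longrightarrow> c_soft X S3 r3)
   \<and> (\<forall>(sc1 :: 'k \<Rightarrow> 'u \<Rightarrow> 'u) S1 r1 (sc2 :: 'k \<Rightarrow> 'w \<Rightarrow> 'w) S2 r2
        (sc3 :: 'k \<Rightarrow> 'z \<Rightarrow> 'z) S3 r3 \<phi> \<psi>.
        short_exact X sc1 S1 r1 sc2 S2 r2 sc3 S3 r3 \<phi> \<psi> \<and> c_soft X S1 r1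
          \<longrightarrow> global_sections_exact X S1 S2 S3 \<phi> \<psi>)"
proof (intro conjI allI impI; (elim conjE)?)
  show "\<exists>(G :: 'a set \<Rightarrow> ('a \<Rightarrow> 'a set \<Rightarrow> 'v) set) resG \<phi>.
      sheaf_hom X sc S res (\<lambda>c f x U. sc c (f x U)) G resG \<phi> \<and>
      stalk_injective X S resG res \<phi> \<and> c_soft X G resG"
    if "is_sheaf X sc S res" for sc :: "'k \<Rightarrow> 'v \<Rightarrow> 'v" and S res
    using lwqc_space.ex_stalk_injective_hom_to_c_soft[OF lwqc_space.intro[OF lwqc] that] .
  fix sc1 :: "'k \<Rightarrow> 'u \<Rightarrow> 'u" and S1 r1 and sc2 :: "'k \<Rightarrow> 'w \<Rightarrow> 'w" and S2 r2
    and sc3 :: "'k \<Rightarrow> 'z \<Rightarrow> 'z" and S3 r3 \<phi> \<psi>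
  assume "short_exact X sc1 S1 r1 sc2 S2 r2 sc3 S3 r3 \<phi> \<psi>" "c_soft X S1 r1"
  then interpret c_soft_kernel_sequence X sc1 S1 r1 sc2 S2 r2 sc3 S3 r3 \<phi> \<psi>
    using lwqc by (intro c_soft_kernel_sequenceI)
  show "c_soft X S2 r2 \<Longrightarrow> c_soft X S3 r3"
    by (rule c_soft_cokernel)
  show "global_sections_exact X S1 S2 S3 \<phi> \<psi>"
    by (rule global_sections_exact[OF cover])
qed

end
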